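(* Let $G$ be a finite group with identity $e$, let $R[G]$ be its group algebra over $\mathbb{R}$, and let $$S=\{x=\textstyle\sum_{g\in G}x_g g\in R[G]:\ \sum_{g\in G}x_g=1,\ x_g\ge 0\ \text{for all } g\in G\}.$$ Let $p(t)=\sum_{k=0}^{\infty}a_kt^k$ be a power series with $0\le a_k<1$ for all $k\ge 0$ and $\sum_{k=0}^\infty a_k=1$, and consider the map $p:S\to S$, $p(x)=a_0e+\sum_{k\ge1}a_kx^k$. Then $p$ is ergodic on $S$: for every $x\in S$ the limit $$\lim_{n\to\infty}\frac1n\sum_{i=1}^n p^{[i]}(x)$$ exists, where $p^{[1]}(x)=p(x)$ and $p^{[i+1]}(x)=p(p^{[i]}(x))$.
   Context: $R[G]$ is considered with the Euclidean topology of the finite-dimensional real vector space with basis $G$. For $x\in S$ the series $a_0e+\sum_{k\ge1}a_kx^k$ converges and its value lies in $S$. *)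

theory Defs
  imports "HOL-Analysis.Analysis" "HOL-Algebra.Group"
begin

text \<open>Elements of the real group algebra R[G] of a finite group G are represented as
functions 'a => real vanishing outside carrier G (coefficients x_g). The function
space carries the product topology, which on these finitely supported functions is the
Euclidean topology.\<close>

definition gconv :: "('a, 'b) monoid_scheme \<Rightarrow> ('a \<Rightarrow> real) \<Rightarrow> ('a \<Rightarrow> real) \<Rightarrow> ('a \<Rightarrow> real)" where
  "gconv G x y = (\<lambda>g. if g \<in> carrier G
      then (\<Sum>h\<in>carrier G. x h * y (inv\<^bsub>G\<^esub> h \<otimes>\<^bsub>G\<^esub> g)) else 0)"

definition gunit :: "('a, 'b) monoid_scheme \<Rightarrow> ('a \<Rightarrow> real)" where
  "gunit G = (\<lambda>g. if g = \<one>\<^bsub>G\<^esub> then 1 else 0)"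

primrec gpow :: "('a, 'b) monoid_scheme \<Rightarrow> ('a \<Rightarrow> real) \<Rightarrow> nat \<Rightarrow> ('a \<Rightarrow> real)" where
  "gpow G x 0 = gunit G"
| "gpow G x (Suc n) = gconv G x (gpow G x n)"

definition gsimplex :: "('a, 'b) monoid_scheme \<Rightarrow> ('a \<Rightarrow> real) set" where
  "gsimplex G = {x. (\<forall>g. g \<notin> carrier G \<longrightarrow> x g = 0) \<and> (\<forall>g\<in>carrier G. 0 \<le> x g)
                  \<and> (\<Sum>g\<in>carrier G. x g) = 1}"

definition pmap :: "('a, 'b) monoid_scheme \<Rightarrow> (nat \<Rightarrow> real) \<Rightarrow> ('a \<Rightarrow> real) \<Rightarrow> ('a \<Rightarrow> real)" where
  "pmap G a x = (\<lambda>g. \<Sum>k. a k * gpow G x k g)"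

end

theory Submission
  imports Defs "HOL-Algebra.Multiplicative_Group"
begin

(* Write p^[n](x) = sum_m q_n(m) x^m, where q_n is the law of the n-th generation of the
   Galton-Watson process with offspring law a, so that the generating function of q_n is the
   n-th iterate f^[n] of f(t) = sum_k a_k t^k.

   The convolution powers x^m on a finite group are asymptotically periodic: for some period T
   the difference x^m - L_(m mod T) decays geometrically.  Indeed nu = x^|G| charges the
   identity, so the supports of nu^j grow until they become a subgroup K, and nu^|G|
   dominates a multiple of the uniform distribution on K (a Doeblin minorisation).

   The geometrically small part contributes sum_m q_n(m) W_m -> q W_0, with q the extinction
   probability, because f^[n](gamma) - f^[n](0) -> 0 for gamma < 1.  The periodic part is a
   combination of the masses q_n(m = r mod T), which by a discrete Fourier transform are
   combinations of f^[n](omega) for T-th roots of unity omega; such a sequence either enters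
   the open disc, where it converges to q, or stays among the T-th roots of unity and is
   eventually periodic.  So every coordinate of p^[n](x) converges along the residue classes
   modulo some period, and such sequences are Cesaro convergent. *)

section \<open>The group algebra of a finite group\<close>

locale finite_group = group +
  assumes finite_carrier: "finite (carrier G)"
begin

definition galg :: "('a \<Rightarrow> real) set" where
  "galg = {y. \<forall>g. g \<notin> carrier G \<longrightarrow> y g = 0}"

lemma gconv_outside: "g \<notin> carrier G \<Longrightarrow> gconv G x y g = 0"
  by (simp add: gconv_def)

lemma gconv_apply: "g \<in> carrier G \<Longrightarrow> gconv G x y g = (\<Sum>h\<in>carrier G. x h * y (inv h \<otimes> g))"
  by (simp add: gconv_def)

lemma gconv_in_galg: "gconv G x y \<in> galg"
  by (simp add: galg_def gconv_outside)

lemma gunit_in_galg: "gunit G \<in> galg"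
  by (auto simp: galg_def gunit_def)

lemma gpow_in_galg: "gpow G x n \<in> galg"
  by (cases n) (auto simp: gunit_in_galg gconv_in_galg)

lemma galg_outside: "y \<in> galg \<Longrightarrow> g \<notin> carrier G \<Longrightarrow> y g = 0"
  by (simp add: galg_def)

lemma sum_translate_left:
  assumes "k \<in> carrier G"
  shows "(\<Sum>l\<in>carrier G. f (k \<otimes> l)) = (\<Sum>h\<in>carrier G. f h)"
proof -
  have "bij_betw (\<lambda>l. k \<otimes> l) (carrier G) (carrier G)"
    using assms by (intro bij_betwI[where g="\<lambda>h. inv k \<otimes> h"]) (auto simp: m_assoc[symmetric])
  then show ?thesis by (rule sum.reindex_bij_betw)
qed

lemma sum_translate_inv_right:
  assumes "g \<in> carrier G"
  shows "(\<Sum>h\<in>carrier G. F h (inv h \<otimes> g)) = (\<Sum>k\<in>carrier G. F (g \<otimes> inv k) k)"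
proof -
  have "bij_betw (\<lambda>k. g \<otimes> inv k) (carrier G) (carrier G)"
    using assms by (intro bij_betwI[where g="\<lambda>h. inv h \<otimes> g"])
      (auto simp: m_assoc inv_mult_group, simp add: m_assoc[symmetric])
  then have "(\<Sum>k\<in>carrier G. F (g \<otimes> inv k) (inv (g \<otimes> inv k) \<otimes> g)) = (\<Sum>h\<in>carrier G. F h (inv h \<otimes> g))"
    by (rule sum.reindex_bij_betw)
  also have "(\<Sum>k\<in>carrier G. F (g \<otimes> inv k) (inv (g \<otimes> inv k) \<otimes> g)) = (\<Sum>k\<in>carrier G. F (g \<otimes> inv k) k)"
    using assms by (intro sum.cong refl) (simp add: inv_mult_group m_assoc)
  finally show ?thesis by simp
qed

lemma gconv_assoc: "gconv G (gconv G x y) z = gconv G x (gconv G y z)"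
proof
  fix g
  show "gconv G (gconv G x y) z g = gconv G x (gconv G y z) g"
  proof (cases "g \<in> carrier G")
    case False
    then show ?thesis by (simp add: gconv_outside)
  next
    case g: True
    have "gconv G (gconv G x y) z g
        = (\<Sum>h\<in>carrier G. (\<Sum>k\<in>carrier G. x k * y (inv k \<otimes> h)) * z (inv h \<otimes> g))"
      using g by (simp add: gconv_apply)
    also have "\<dots> = (\<Sum>k\<in>carrier G. \<Sum>h\<in>carrier G. x k * (y (inv k \<otimes> h) * z (inv h \<otimes> g)))"
      by (subst sum.swap) (simp add: sum_distrib_right mult.assoc)
    also have "\<dots> = (\<Sum>k\<in>carrier G. \<Sum>l\<in>carrier G. x k * (y l * z (inv l \<otimes> (inv k \<otimes> g))))"
    proof (rule sum.cong[OF refl])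
      fix k assume k: "k \<in> carrier G"
      have "(\<Sum>h\<in>carrier G. x k * (y (inv k \<otimes> h) * z (inv h \<otimes> g)))
          = (\<Sum>l\<in>carrier G. x k * (y (inv k \<otimes> (k \<otimes> l)) * z (inv (k \<otimes> l) \<otimes> g)))"
        using k by (rule sum_translate_left[symmetric])
      also have "\<dots> = (\<Sum>l\<in>carrier G. x k * (y l * z (inv l \<otimes> (inv k \<otimes> g))))"
        using k g by (intro sum.cong refl) (simp add: m_assoc[symmetric] inv_mult_group)
      finally show "(\<Sum>h\<in>carrier G. x k * (y (inv k \<otimes> h) * z (inv h \<otimes> g)))
          = (\<Sum>l\<in>carrier G. x k * (y l * z (inv l \<otimes> (inv k \<otimes> g))))" .
    qed
    also have "\<dots> = gconv G x (gconv G y z) g"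
      using g by (simp add: gconv_apply sum_distrib_left)
    finally show ?thesis .
  qed
qed

lemma gconv_gunit_left: "y \<in> galg \<Longrightarrow> gconv G (gunit G) y = y"
proof
  fix g assume y: "y \<in> galg"
  show "gconv G (gunit G) y g = y g"
  proof (cases "g \<in> carrier G")
    case True
    then have "gconv G (gunit G) y g = (\<Sum>h\<in>carrier G. if h = \<one> then y g else 0)"
      by (intro trans[OF gconv_apply[OF True]] sum.cong) (auto simp: gunit_def)
    then show ?thesis by (simp add: finite_carrier)
  qed (use y in \<open>simp add: gconv_outside galg_outside\<close>)
qed

lemma gconv_gunit_right: "y \<in> galg \<Longrightarrow> gconv G y (gunit G) = y"
proof
  fix g assume y: "y \<in> galg"
  show "gconv G y (gunit G) g = y g"
  proof (cases "g \<in> carrier G")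
    case True
    have "h \<in> carrier G \<Longrightarrow> inv h \<otimes> g = \<one> \<longleftrightarrow> h = g" for h
      using True by (metis inv_closed inv_comm inv_inv l_inv r_inv_ex m_closed inv_equality)
    then have "gconv G y (gunit G) g = (\<Sum>h\<in>carrier G. if h = g then y h else 0)"
      using True by (intro trans[OF gconv_apply[OF True]] sum.cong) (auto simp: gunit_def)
    then show ?thesis using True by (simp add: finite_carrier)
  qed (use y in \<open>simp add: gconv_outside galg_outside\<close>)
qed

lemma gpow_add: "gpow G x (m + n) = gconv G (gpow G x m) (gpow G x n)"
  by (induction m) (simp_all add: gconv_gunit_left gpow_in_galg gconv_assoc)

lemma gpow_mult: "gpow G x (m * n) = gpow G (gpow G x m) n"
  by (induction n) (simp_all add: gpow_add)

lemma gpow_1: "y \<in> galg \<Longrightarrow> gpow G y 1 = y"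
  by (simp add: gconv_gunit_right)

lemma gconv_diff_left: "gconv G (\<lambda>g. y g - z g) w = (\<lambda>g. gconv G y w g - gconv G z w g)"
  by (simp add: gconv_def left_diff_distrib sum_subtractf fun_eq_iff)

lemma gconv_diff_right: "gconv G w (\<lambda>g. y g - z g) = (\<lambda>g. gconv G w y g - gconv G w z g)"
  by (simp add: gconv_def right_diff_distrib sum_subtractf fun_eq_iff)

lemma gconv_scale_left: "gconv G (\<lambda>g. c * y g) w = (\<lambda>g. c * gconv G y w g)"
  by (simp add: gconv_def sum_distrib_left mult.assoc fun_eq_iff)

lemma sum_gconv: "(\<Sum>g\<in>carrier G. gconv G y z g) = (\<Sum>g\<in>carrier G. y g) * (\<Sum>g\<in>carrier G. z g)"
proof -
  have "(\<Sum>g\<in>carrier G. gconv G y z g) = (\<Sum>h\<in>carrier G. y h * (\<Sum>g\<in>carrier G. z (inv h \<otimes> g)))"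
    by (simp add: gconv_apply) (subst sum.swap, simp add: sum_distrib_left)
  also have "\<dots> = (\<Sum>h\<in>carrier G. y h * (\<Sum>g\<in>carrier G. z g))"
    by (intro sum.cong refl) (simp add: sum_translate_left)
  finally show ?thesis by (simp add: sum_distrib_right)
qed

lemma gsimplex_iff:
  "y \<in> gsimplex G \<longleftrightarrow> y \<in> galg \<and> (\<forall>g\<in>carrier G. 0 \<le> y g) \<and> (\<Sum>g\<in>carrier G. y g) = 1"
  by (auto simp: gsimplex_def galg_def)

lemma gsimplex_nonneg: "y \<in> gsimplex G \<Longrightarrow> 0 \<le> y g"
  by (cases "g \<in> carrier G") (auto simp: gsimplex_def)

lemma gsimplex_le_1:
  assumes "y \<in> gsimplex G"
  shows "y g \<le> 1"
proof (cases "g \<in> carrier G")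
  case True
  have "y g \<le> (\<Sum>g\<in>carrier G. y g)"
    using assms True by (intro member_le_sum finite_carrier) (auto simp: gsimplex_nonneg)
  then show ?thesis using assms by (simp add: gsimplex_def)
qed (use assms in \<open>simp add: gsimplex_def\<close>)

lemma gunit_in_gsimplex: "gunit G \<in> gsimplex G"
  unfolding gsimplex_iff using gunit_in_galg by (simp add: gunit_def finite_carrier)

lemma gconv_nonneg: "y \<in> gsimplex G \<Longrightarrow> z \<in> gsimplex G \<Longrightarrow> 0 \<le> gconv G y z g"
  by (cases "g \<in> carrier G")
    (auto simp: gconv_apply gconv_outside gsimplex_nonneg intro!: sum_nonneg mult_nonneg_nonneg)

lemma gconv_in_gsimplex:
  assumes "y \<in> gsimplex G" "z \<in> gsimplex G"
  shows "gconv G y z \<in> gsimplex G"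
  using assms gconv_nonneg[OF assms] by (simp add: gsimplex_iff gconv_in_galg sum_gconv)

lemma gpow_in_gsimplex: "y \<in> gsimplex G \<Longrightarrow> gpow G y n \<in> gsimplex G"
  by (induction n) (auto simp: gunit_in_gsimplex gconv_in_gsimplex)

lemma gconv_term_le:
  assumes "y \<in> gsimplex G" "z \<in> gsimplex G" "g \<in> carrier G" "h \<in> carrier G"
  shows "y h * z (inv h \<otimes> g) \<le> gconv G y z g"
  using assms by (simp add: gconv_apply)
    (intro member_le_sum finite_carrier mult_nonneg_nonneg gsimplex_nonneg; simp)

lemma gconv_pos_iff:
  assumes "y \<in> gsimplex G" "z \<in> gsimplex G" "g \<in> carrier G"
  shows "0 < gconv G y z g \<longleftrightarrow> (\<exists>h\<in>carrier G. 0 < y h \<and> 0 < z (inv h \<otimes> g))"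
proof
  assume "0 < gconv G y z g"
  then have "0 < (\<Sum>h\<in>carrier G. y h * z (inv h \<otimes> g))"
    using assms(3) by (simp add: gconv_apply)
  then obtain h where "h \<in> carrier G" "y h * z (inv h \<otimes> g) \<noteq> 0"
    by (metis (no_types, lifting) less_irrefl sum.neutral)
  then show "\<exists>h\<in>carrier G. 0 < y h \<and> 0 < z (inv h \<otimes> g)"
    using assms by (auto simp: order.strict_iff_order gsimplex_nonneg)
next
  assume "\<exists>h\<in>carrier G. 0 < y h \<and> 0 < z (inv h \<otimes> g)"
  then obtain h where "h \<in> carrier G" "0 < y h * z (inv h \<otimes> g)" by auto
  then show "0 < gconv G y z g"
    using gconv_term_le[OF assms] by (meson less_le_trans)
qed

definition gnorm :: "('a \<Rightarrow> real) \<Rightarrow> real" where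
  "gnorm y = (\<Sum>g\<in>carrier G. \<bar>y g\<bar>)"

lemma abs_le_gnorm: "y \<in> galg \<Longrightarrow> \<bar>y g\<bar> \<le> gnorm y"
  unfolding gnorm_def
  by (cases "g \<in> carrier G") (auto simp: galg_outside finite_carrier intro!: member_le_sum sum_nonneg)

lemma gnorm_gconv_le: "gnorm (gconv G y z) \<le> gnorm y * gnorm z"
proof -
  have "gnorm (gconv G y z) \<le> (\<Sum>g\<in>carrier G. \<Sum>h\<in>carrier G. \<bar>y h\<bar> * \<bar>z (inv h \<otimes> g)\<bar>)"
    unfolding gnorm_def
  proof (intro sum_mono)
    fix g assume "g \<in> carrier G"
    then show "\<bar>gconv G y z g\<bar> \<le> (\<Sum>h\<in>carrier G. \<bar>y h\<bar> * \<bar>z (inv h \<otimes> g)\<bar>)"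
      by (simp add: gconv_apply order.trans[OF sum_abs] abs_mult)
  qed
  also have "\<dots> = (\<Sum>h\<in>carrier G. \<bar>y h\<bar> * (\<Sum>g\<in>carrier G. \<bar>z (inv h \<otimes> g)\<bar>))"
    by (subst sum.swap) (simp add: sum_distrib_left)
  also have "\<dots> = (\<Sum>h\<in>carrier G. \<bar>y h\<bar> * gnorm z)"
    by (intro sum.cong refl) (simp add: gnorm_def sum_translate_left[where f="\<lambda>g. \<bar>z g\<bar>"])
  finally show ?thesis by (simp add: sum_distrib_right gnorm_def)
qed

lemma gnorm_gsimplex: "y \<in> gsimplex G \<Longrightarrow> gnorm y = 1"
  by (simp add: gnorm_def gsimplex_iff)

end

section \<open>Asymptotic periodicity of convolution powers\<close>

context finite_group
begin

lemma gpow_power_le: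
  assumes y: "y \<in> gsimplex G" and s: "s \<in> carrier G"
  shows "y s ^ n \<le> gpow G y n (s [^] n)"
proof (induction n)
  case 0
  then show ?case by (simp add: gunit_def)
next
  case (Suc n)
  have "inv s \<otimes> s [^] Suc n = s [^] n"
    using s by (subst nat_pow_Suc2[OF s]) (simp add: m_assoc[symmetric])
  then have "y s * gpow G y n (s [^] n) \<le> gpow G y (Suc n) (s [^] Suc n)"
    using gconv_term_le[OF y gpow_in_gsimplex[OF y], of "s [^] Suc n" s] s by simp
  moreover have "y s * y s ^ n \<le> y s * gpow G y n (s [^] n)"
    using Suc y by (simp add: mult_left_mono gsimplex_nonneg)
  ultimately show ?case by simp
qed

lemma gpow_order_unit_pos:
  assumes x: "x \<in> gsimplex G"
  shows "0 < gpow G x (order G) \<one>"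
proof -
  have "\<exists>s\<in>carrier G. 0 < x s"
  proof (rule ccontr)
    assume "\<not> ?thesis"
    then have "\<forall>s\<in>carrier G. x s = 0"
      using x by (metis gsimplex_nonneg less_eq_real_def)
    then show False using x by (simp add: gsimplex_def)
  qed
  then obtain s where s: "s \<in> carrier G" "0 < x s" by blast
  have "x s ^ order G \<le> gpow G x (order G) \<one>"
    using gpow_power_le[OF x s(1), of "order G"] pow_order_eq_1[OF s(1)] by simp
  then show ?thesis using s(2) by (meson less_le_trans zero_less_power)
qed

definition gsupport :: "('a \<Rightarrow> real) \<Rightarrow> 'a set" where
  "gsupport y = {g \<in> carrier G. 0 < y g}"

lemma gsupport_subset: "gsupport y \<subseteq> carrier G"
  by (auto simp: gsupport_def)

lemma gsupport_gconv_cong: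
  assumes "y \<in> gsimplex G" "z \<in> gsimplex G" "z' \<in> gsimplex G" "gsupport z = gsupport z'"
  shows "gsupport (gconv G y z) = gsupport (gconv G y z')"
proof -
  have "0 < z (inv h \<otimes> g) \<longleftrightarrow> 0 < z' (inv h \<otimes> g)" if "g \<in> carrier G" "h \<in> carrier G" for g h
    using assms(4) that by (auto simp: gsupport_def set_eq_iff)
  then show ?thesis
    using assms by (auto simp: gsupport_def gconv_pos_iff)
qed

end

locale lazy_walk = finite_group +
  fixes \<nu> :: "'a \<Rightarrow> real"
  assumes nu_gsimplex: "\<nu> \<in> gsimplex G"
    and nu_unit_pos: "0 < \<nu> \<one>"
begin

lemma gsupport_gpow_mono: "gsupport (gpow G \<nu> m) \<subseteq> gsupport (gpow G \<nu> (Suc m))"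
proof
  fix g assume "g \<in> gsupport (gpow G \<nu> m)"
  then have g: "g \<in> carrier G" "0 < gpow G \<nu> m g" by (auto simp: gsupport_def)
  have "\<nu> \<one> * gpow G \<nu> m (inv \<one> \<otimes> g) \<le> gpow G \<nu> (Suc m) g"
    using gconv_term_le[OF nu_gsimplex gpow_in_gsimplex[OF nu_gsimplex], of g \<one>] g by simp
  then show "g \<in> gsupport (gpow G \<nu> (Suc m))"
    using g nu_unit_pos by (simp add: gsupport_def) (smt (verit) mult_pos_pos)
qed

lemma gsupport_gpow_const_from:
  assumes "gsupport (gpow G \<nu> m) = gsupport (gpow G \<nu> (Suc m))" "m \<le> k"
  shows "gsupport (gpow G \<nu> k) = gsupport (gpow G \<nu> m)"
  using assms(2)
proof (induction k rule: dec_induct)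
  case (step k)
  have "gsupport (gpow G \<nu> (Suc k)) = gsupport (gconv G \<nu> (gpow G \<nu> m))"
    using step.IH by (simp add: gsupport_gconv_cong nu_gsimplex gpow_in_gsimplex)
  then show ?case using assms(1) by simp
qed simp

lemma gsupport_gpow_stops_growing:
  "\<exists>m<card (carrier G). gsupport (gpow G \<nu> m) = gsupport (gpow G \<nu> (Suc m))"
proof (rule ccontr)
  assume "\<not> ?thesis"
  then have grow: "m < card (carrier G) \<Longrightarrow> gsupport (gpow G \<nu> m) \<subset> gsupport (gpow G \<nu> (Suc m))" for m
    using gsupport_gpow_mono by blast
  have fin: "finite (gsupport y)" for y
    using finite_subset[OF gsupport_subset finite_carrier] .
  have "m \<le> card (carrier G) \<Longrightarrow> m < card (gsupport (gpow G \<nu> m))" for m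
  proof (induction m)
    case 0
    have "\<one> \<in> gsupport (gpow G \<nu> 0)" by (simp add: gsupport_def gunit_def)
    then show ?case using fin by (auto simp: card_gt_0_iff)
  next
    case (Suc m)
    then show ?case using psubset_card_mono[OF fin grow[of m]] by simp
  qed
  then have "card (carrier G) < card (gsupport (gpow G \<nu> (card (carrier G))))" by simp
  then show False using card_mono[OF finite_carrier gsupport_subset] leD by blast
qed

definition stable_support :: "'a set" where
  "stable_support = gsupport (gpow G \<nu> (card (carrier G)))"

lemma gsupport_gpow_eventually:
  assumes "card (carrier G) \<le> k"
  shows "gsupport (gpow G \<nu> k) = stable_support"
proof -
  obtain m where m: "m < card (carrier G)" "gsupport (gpow G \<nu> m) = gsupport (gpow G \<nu> (Suc m))"
    using gsupport_gpow_stops_growing by blast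
  have "gsupport (gpow G \<nu> k) = gsupport (gpow G \<nu> m)"
    using m(1) assms by (intro gsupport_gpow_const_from[OF m(2)]) simp
  also have "\<dots> = stable_support"
    using m(1) unfolding stable_support_def by (intro gsupport_gpow_const_from[OF m(2), symmetric]) simp
  finally show ?thesis .
qed

lemma unit_in_stable_support: "\<one> \<in> stable_support"
proof -
  have "\<nu> \<one> ^ card (carrier G) \<le> gpow G \<nu> (card (carrier G)) \<one>"
    using gpow_power_le[OF nu_gsimplex one_closed] by simp
  then show ?thesis
    using nu_unit_pos by (simp add: stable_support_def gsupport_def) (meson less_le_trans zero_less_power)
qed

lemma stable_support_mult:
  assumes "k \<in> stable_support" "l \<in> stable_support"
  shows "k \<otimes> l \<in> stable_support"
proof -
  let ?N = "card (carrier G)"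
  have kl: "k \<in> carrier G" "l \<in> carrier G" "0 < gpow G \<nu> ?N k" "0 < gpow G \<nu> ?N l"
    using assms by (auto simp: stable_support_def gsupport_def)
  have "gpow G \<nu> ?N k * gpow G \<nu> ?N (inv k \<otimes> (k \<otimes> l)) \<le> gpow G \<nu> (?N + ?N) (k \<otimes> l)"
    unfolding gpow_add using kl by (intro gconv_term_le gpow_in_gsimplex nu_gsimplex) auto
  moreover have "inv k \<otimes> (k \<otimes> l) = l" using kl by (simp add: m_assoc[symmetric])
  ultimately have "k \<otimes> l \<in> gsupport (gpow G \<nu> (?N + ?N))"
    using kl by (simp add: gsupport_def) (smt (verit) mult_pos_pos)
  then show ?thesis using gsupport_gpow_eventually[of "?N + ?N"] by simp
qed

lemma subgroup_stable_support: "subgroup stable_support G"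
proof (rule subgroupI)
  show sub: "stable_support \<subseteq> carrier G"
    by (simp add: stable_support_def gsupport_subset)
  show "stable_support \<noteq> {}" using unit_in_stable_support by blast
  have pow: "k [^] n \<in> stable_support" if "k \<in> stable_support" for k and n :: nat
    by (induction n) (auto simp: unit_in_stable_support stable_support_mult that)
  fix k assume k: "k \<in> stable_support"
  then have kG: "k \<in> carrier G" using sub by blast
  have "k [^] (order G - 1) \<otimes> k = k [^] order G"
    using order_gt_0_iff_finite finite_carrier kG by (simp add: nat_pow_Suc[symmetric] del: nat_pow_Suc)
  then have "inv k = k [^] (order G - 1)"
    using kG pow_order_eq_1 by (intro inv_equality) auto
  then show "inv k \<in> stable_support" using pow[OF k] by simp
qed (use stable_support_mult in blast)

lemma finite_stable_support: "finite stable_support"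
  using finite_subset[OF subgroup.subset[OF subgroup_stable_support] finite_carrier] .

lemma card_stable_support_pos: "0 < card stable_support"
  using finite_stable_support unit_in_stable_support card_gt_0_iff by blast

lemma inv_mult_in_stable_support_iff:
  assumes "h \<in> stable_support" "g \<in> carrier G"
  shows "inv h \<otimes> g \<in> stable_support \<longleftrightarrow> g \<in> stable_support"
proof -
  interpret K: subgroup stable_support G by (rule subgroup_stable_support)
  have "h \<otimes> (inv h \<otimes> g) = g" using assms K.mem_carrier by (simp add: m_assoc[symmetric])
  then show ?thesis using assms by (metis K.m_closed K.m_inv_closed)
qed

lemma mult_inv_in_stable_support_iff:
  assumes "h \<in> stable_support" "g \<in> carrier G"
  shows "g \<otimes> inv h \<in> stable_support \<longleftrightarrow> g \<in> stable_support"
proof -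
  interpret K: subgroup stable_support G by (rule subgroup_stable_support)
  have "(g \<otimes> inv h) \<otimes> h = g" using assms K.mem_carrier by (simp add: m_assoc)
  then show ?thesis using assms by (metis K.m_closed K.m_inv_closed)
qed

definition uniform :: "'a \<Rightarrow> real" where
  "uniform g = (if g \<in> stable_support then 1 / real (card stable_support) else 0)"

lemma uniform_in_gsimplex: "uniform \<in> gsimplex G"
proof -
  have K: "stable_support \<subseteq> carrier G" by (rule subgroup.subset[OF subgroup_stable_support])
  then have "(\<Sum>g\<in>carrier G. uniform g) = (\<Sum>g\<in>stable_support. 1 / real (card stable_support))"
    unfolding uniform_def by (simp add: sum.If_cases finite_carrier Int_absorb1)
  then show ?thesis
    using K card_stable_support_pos by (auto simp: gsimplex_iff galg_def uniform_def)
qed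

lemma gconv_uniform_left:
  assumes "\<And>g. g \<notin> stable_support \<Longrightarrow> y g = 0"
  shows "gconv G uniform y = (\<lambda>g. (\<Sum>h\<in>carrier G. y h) * uniform g)"
proof
  fix g
  show "gconv G uniform y g = (\<Sum>h\<in>carrier G. y h) * uniform g"
  proof (cases "g \<in> carrier G")
    case g: True
    have "gconv G uniform y g = (\<Sum>k\<in>carrier G. uniform (g \<otimes> inv k) * y k)"
      using g by (simp add: gconv_apply sum_translate_inv_right[where F="\<lambda>h k. uniform h * y k"])
    also have "\<dots> = (\<Sum>k\<in>carrier G. y k * uniform g)"
    proof (intro sum.cong refl)
      fix k
      show "uniform (g \<otimes> inv k) * y k = y k * uniform g"
        using assms[of k] mult_inv_in_stable_support_iff[OF _ g, of k]
        by (cases "k \<in> stable_support") (auto simp: uniform_def)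
    qed
    finally show ?thesis by (simp add: sum_distrib_right)
  qed (use subgroup.subset[OF subgroup_stable_support] in \<open>auto simp: gconv_outside uniform_def\<close>)
qed

lemma gconv_uniform_right:
  assumes "\<And>g. g \<notin> stable_support \<Longrightarrow> y g = 0"
  shows "gconv G y uniform = (\<lambda>g. (\<Sum>h\<in>carrier G. y h) * uniform g)"
proof
  fix g
  show "gconv G y uniform g = (\<Sum>h\<in>carrier G. y h) * uniform g"
  proof (cases "g \<in> carrier G")
    case g: True
    have "gconv G y uniform g = (\<Sum>h\<in>carrier G. y h * uniform g)"
      unfolding gconv_apply[OF g]
    proof (intro sum.cong refl)
      fix h
      show "y h * uniform (inv h \<otimes> g) = y h * uniform g"
        using assms[of h] inv_mult_in_stable_support_iff[OF _ g, of h]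
        by (cases "h \<in> stable_support") (auto simp: uniform_def)
    qed
    then show ?thesis by (simp add: sum_distrib_right)
  qed (use subgroup.subset[OF subgroup_stable_support] in \<open>auto simp: gconv_outside uniform_def\<close>)
qed

definition block :: "'a \<Rightarrow> real" where
  "block = gpow G \<nu> (card (carrier G))"

lemma block_in_gsimplex: "block \<in> gsimplex G"
  by (simp add: block_def gpow_in_gsimplex nu_gsimplex)

lemma gpow_block_in_gsimplex: "gpow G block j \<in> gsimplex G"
  by (simp add: block_in_gsimplex gpow_in_gsimplex)

lemma gpow_block_outside:
  assumes "g \<notin> stable_support"
  shows "gpow G block j g = 0"
proof (cases "j = 0")
  case True
  then show ?thesis using assms unit_in_stable_support by (auto simp: gunit_def)
next
  case False
  then have "gsupport (gpow G block j) = stable_support"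
    by (simp add: block_def gpow_mult[symmetric] gsupport_gpow_eventually)
  then have "g \<in> carrier G \<Longrightarrow> \<not> 0 < gpow G block j g"
    using assms by (auto simp: gsupport_def)
  then show ?thesis
    using gpow_block_in_gsimplex[of j] gsimplex_nonneg[OF gpow_block_in_gsimplex, of j g]
    by (cases "g \<in> carrier G") (auto simp: gsimplex_def)
qed

definition doeblin_const :: real where
  "doeblin_const = real (card stable_support) * Min (block ` stable_support)"

lemma doeblin_const_pos: "0 < doeblin_const"
proof -
  have "\<forall>b\<in>block ` stable_support. 0 < b"
    by (auto simp: stable_support_def gsupport_def block_def)
  then have "0 < Min (block ` stable_support)"
    using finite_stable_support unit_in_stable_support by (subst Min_gr_iff) auto
  then show ?thesis
    using card_stable_support_pos by (simp add: doeblin_const_def)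
qed

definition residual :: "'a \<Rightarrow> real" where
  "residual g = block g - doeblin_const * uniform g"

lemma residual_nonneg: "0 \<le> residual g"
proof (cases "g \<in> stable_support")
  case True
  then have "Min (block ` stable_support) \<le> block g"
    using finite_stable_support by (intro Min_le) auto
  then show ?thesis
    using True card_stable_support_pos by (simp add: residual_def doeblin_const_def uniform_def)
next
  case False
  then show ?thesis using gpow_block_outside[of g 1] gpow_1[of block] block_in_gsimplex
    by (simp add: residual_def uniform_def gsimplex_iff)
qed

lemma gnorm_residual: "gnorm residual = 1 - doeblin_const"
proof -
  have "gnorm residual = (\<Sum>g\<in>carrier G. block g) - doeblin_const * (\<Sum>g\<in>carrier G. uniform g)"
    using residual_nonneg by (simp add: gnorm_def residual_def sum_subtractf sum_distrib_left)
  then show ?thesis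
    using block_in_gsimplex uniform_in_gsimplex by (simp add: gsimplex_iff)
qed

lemma doeblin_const_le_1: "doeblin_const \<le> 1"
  using gnorm_residual sum_nonneg[of "carrier G" "\<lambda>g. \<bar>residual g\<bar>"] by (simp add: gnorm_def)

lemma gpow_block_minus_uniform_Suc:
  "(\<lambda>g. gpow G block (Suc j) g - uniform g) = gconv G residual (\<lambda>g. gpow G block j g - uniform g)"
proof -
  have mass: "(\<Sum>g\<in>carrier G. y g) = 1" if "y \<in> gsimplex G" for y
    using that by (simp add: gsimplex_iff)
  have "gconv G uniform uniform = uniform" "gconv G uniform (gpow G block j) = uniform"
    "gconv G block uniform = uniform"
    using gconv_uniform_left[of uniform] gconv_uniform_left[of "gpow G block j"]
      gconv_uniform_right[of block] gpow_block_outside[of _ j] gpow_block_outside[of _ 1]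
      mass[OF uniform_in_gsimplex] mass[OF gpow_block_in_gsimplex] mass[OF block_in_gsimplex]
      gpow_1[of block] block_in_gsimplex
    by (auto simp: uniform_def gsimplex_iff)
  then show ?thesis
    unfolding residual_def
    by (simp add: gconv_diff_left gconv_diff_right gconv_scale_left)
qed

lemma gnorm_gpow_block_minus_uniform:
  "gnorm (\<lambda>g. gpow G block j g - uniform g) \<le> 2 * (1 - doeblin_const) ^ j"
proof (induction j)
  case 0
  have "gnorm (\<lambda>g. gpow G block 0 g - uniform g) \<le> gnorm (gunit G) + gnorm uniform"
    unfolding gnorm_def by (simp add: sum.distrib[symmetric] sum_mono abs_triangle_ineq4)
  then show ?case
    using gnorm_gsimplex[OF gunit_in_gsimplex] gnorm_gsimplex[OF uniform_in_gsimplex] by simp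
next
  case (Suc j)
  have "gnorm (\<lambda>g. gpow G block (Suc j) g - uniform g)
      \<le> gnorm residual * gnorm (\<lambda>g. gpow G block j g - uniform g)"
    unfolding gpow_block_minus_uniform_Suc by (rule gnorm_gconv_le)
  also have "\<dots> \<le> (1 - doeblin_const) * (2 * (1 - doeblin_const) ^ j)"
    using Suc doeblin_const_le_1 by (simp add: gnorm_residual mult_left_mono)
  finally show ?case by simp
qed

end

lemma power_div_le_root_power:
  fixes b :: real
  assumes b: "0 < b" "b < 1" and T: "0 < T"
  shows "b ^ (m div T) \<le> root T b ^ m / b"
proof -
  have r: "0 < root T b" "root T b < 1" "root T b ^ T = b"
    using b T by (auto simp: real_root_gt_zero)
  have "m = T * (m div T) + m mod T" by simp
  moreover have "m mod T < T" using T by simp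
  ultimately have "m \<le> T * (m div T + 1)" unfolding distrib_left by linarith
  have "b ^ (m div T) * b = (root T b ^ T) ^ (m div T + 1)"
    by (simp add: r(3))
  also have "\<dots> = root T b ^ (T * (m div T + 1))"
    by (rule power_mult[symmetric])
  also have "\<dots> \<le> root T b ^ m"
    using r \<open>m \<le> T * (m div T + 1)\<close> by (intro power_decreasing) auto
  finally show ?thesis using b by (simp add: field_simps)
qed

context finite_group
begin

lemma gpow_asymptotically_periodic:
  assumes x: "x \<in> gsimplex G"
  obtains T :: nat and \<gamma> :: real and L :: "nat \<Rightarrow> 'a \<Rightarrow> real" and C :: real
  where "0 < T" "0 < \<gamma>" "\<gamma> < 1" "\<And>m g. \<bar>gpow G x m g - L (m mod T) g\<bar> \<le> C * \<gamma> ^ m"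
proof -
  interpret W: lazy_walk G "gpow G x (order G)"
    by unfold_locales (simp_all add: gpow_in_gsimplex[OF x] gpow_order_unit_pos[OF x])
  define T where "T = order G * card (carrier G)"
  have T: "0 < T" using order_gt_0_iff_finite finite_carrier by (simp add: T_def order_def)
  \<comment> \<open>a positive bound for \<open>1 - W.doeblin_const\<close>, which may vanish\<close>
  define \<beta> where "\<beta> = (2 - W.doeblin_const) / 2"
  have \<beta>: "0 < \<beta>" "\<beta> < 1" "1 - W.doeblin_const \<le> \<beta>"
    using W.doeblin_const_pos W.doeblin_const_le_1 by (auto simp: \<beta>_def)
  define L where "L r = gconv G W.uniform (gpow G x r)" for r
  have "\<bar>gpow G x m g - L (m mod T) g\<bar> \<le> (2 / \<beta>) * root T \<beta> ^ m" for m g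
  proof -
    define j r where "j = m div T" and "r = m mod T"
    have "gpow G x m = gpow G x (T * j + r)"
      by (simp add: j_def r_def)
    also have "\<dots> = gconv G (gpow G W.block j) (gpow G x r)"
      by (simp add: gpow_add T_def W.block_def gpow_mult)
    finally have "gpow G x m = gconv G (gpow G W.block j) (gpow G x r)" .
    then have "\<bar>gpow G x m g - L r g\<bar>
        = \<bar>gconv G (\<lambda>g. gpow G W.block j g - W.uniform g) (gpow G x r) g\<bar>"
      by (simp add: L_def gconv_diff_left)
    also have "\<dots> \<le> gnorm (gconv G (\<lambda>g. gpow G W.block j g - W.uniform g) (gpow G x r))"
      by (rule abs_le_gnorm[OF gconv_in_galg])
    also have "\<dots> \<le> gnorm (\<lambda>g. gpow G W.block j g - W.uniform g) * gnorm (gpow G x r)"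
      by (rule gnorm_gconv_le)
    also have "\<dots> \<le> 2 * \<beta> ^ j"
      using W.gnorm_gpow_block_minus_uniform[of j] power_mono[OF \<beta>(3), of j] W.doeblin_const_le_1
      by (simp add: gnorm_gsimplex gpow_in_gsimplex x)
    also have "\<dots> \<le> (2 / \<beta>) * root T \<beta> ^ m"
      using power_div_le_root_power[OF \<beta>(1,2) T, of m] \<beta>(1) by (simp add: j_def field_simps)
    finally show ?thesis by (simp add: r_def)
  qed
  moreover have "0 < root T \<beta>" "root T \<beta> < 1"
    using \<beta> T by (auto simp: real_root_gt_zero)
  ultimately show thesis using that T by blast
qed

end

section \<open>Probability sequences and generating functions\<close>

definition prob_seq :: "(nat \<Rightarrow> real) \<Rightarrow> bool" where
  "prob_seq q \<longleftrightarrow> (\<forall>m. 0 \<le> q m) \<and> q sums 1"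

lemma prob_seq_nonneg: "prob_seq q \<Longrightarrow> 0 \<le> q m"
  by (simp add: prob_seq_def)

lemma prob_seq_summable: "prob_seq q \<Longrightarrow> summable q"
  by (auto simp: prob_seq_def sums_summable)

lemma prob_seq_suminf: "prob_seq q \<Longrightarrow> suminf q = 1"
  by (auto simp: prob_seq_def sums_iff)

lemma prob_seq_has_sum: "prob_seq q \<Longrightarrow> (q has_sum 1) UNIV"
  by (auto simp: prob_seq_def intro: sums_nonneg_imp_has_sum)

lemma prob_seq_le_1: "prob_seq q \<Longrightarrow> q m \<le> 1"
  using sum_le_suminf[OF prob_seq_summable, of q "{m}"] by (simp add: prob_seq_suminf prob_seq_nonneg)

lemma prob_seq_delta: "prob_seq (\<lambda>m. if m = j then 1 else 0)"
  unfolding prob_seq_def using sums_single[of j "\<lambda>_. 1::real"] by simp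

lemma prob_seq_summable_norm_scaleR:
  fixes V :: "nat \<Rightarrow> 'b::real_normed_vector"
  assumes q: "prob_seq q" and V: "\<And>m. norm (V m) \<le> B"
  shows "summable (\<lambda>m. norm (q m *\<^sub>R V m))"
proof (rule summable_comparison_test[OF _ summable_mult2[OF prob_seq_summable[OF q], of B]])
  show "\<exists>N. \<forall>m\<ge>N. norm (norm (q m *\<^sub>R V m)) \<le> q m * B"
    using V prob_seq_nonneg[OF q] by (auto intro: mult_left_mono)
qed

lemma prob_seq_summable_mult:
  assumes "prob_seq q" "\<And>m. \<bar>h m\<bar> \<le> B"
  shows "summable (\<lambda>m. q m * h m)"
  using summable_norm_cancel[OF prob_seq_summable_norm_scaleR[of q h B]] assms by simp

lemma mixture_summable_on:
  fixes V :: "nat \<Rightarrow> 'b::banach"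
  assumes a: "\<And>k. 0 \<le> a k" "summable a"
    and c: "\<And>k. prob_seq (c k)"
    and V: "\<And>m. norm (V m) \<le> 1"
  shows "(\<lambda>(k, m). (a k * c k m) *\<^sub>R V m) summable_on UNIV \<times> UNIV"
proof -
  have c_nonneg: "0 \<le> c k m" for k m by (rule prob_seq_nonneg[OF c])
  have row_weights: "((\<lambda>m. a k * c k m) has_sum a k) UNIV" for k
    using has_sum_cmult_right[OF prob_seq_has_sum[OF c[of k]], of "a k"] by simp
  have "(\<lambda>km. norm (case km of (k, m) \<Rightarrow> a k * c k m)) summable_on UNIV \<times> UNIV"
  proof (subst Infinite_Sum.abs_summable_on_Sigma_iff, intro conjI ballI)
    show "(\<lambda>m. norm (case (k, m) of (k, m) \<Rightarrow> a k * c k m)) summable_on UNIV" for k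
      using row_weights[of k] a c_nonneg by (auto simp: summable_on_def)
    have "infsum (\<lambda>m. norm (case (k, m) of (k, m) \<Rightarrow> a k * c k m)) UNIV = a k" for k
      using row_weights[of k] a c_nonneg by (simp add: infsumI)
    then show "(\<lambda>k. norm (infsum (\<lambda>m. norm (case (k, m) of (k, m) \<Rightarrow> a k * c k m)) UNIV))
        summable_on UNIV"
      using a by (simp add: summable_on_UNIV_nonneg_real_iff)
  qed
  then have "(\<lambda>km. norm (case km of (k, m) \<Rightarrow> (a k * c k m) *\<^sub>R V m)) summable_on UNIV \<times> UNIV"
  proof (rule Infinite_Sum.abs_summable_on_comparison_test)
    fix km :: "nat \<times> nat"
    obtain k m where km: "km = (k, m)" by fastforce
    have "norm ((a k * c k m) *\<^sub>R V m) \<le> a k * c k m"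
      using V[of m] a(1)[of k] c_nonneg[of k m] by (simp add: mult_left_le)
    then show "norm (case km of (k, m) \<Rightarrow> (a k * c k m) *\<^sub>R V m) \<le> norm (case km of (k, m) \<Rightarrow> a k * c k m)"
      using a(1)[of k] c_nonneg[of k m] by (simp add: km)
  qed
  then show ?thesis by (rule abs_summable_summable)
qed

lemma mixture_sums:
  fixes V :: "nat \<Rightarrow> 'b::banach"
  assumes a: "\<And>k. 0 \<le> a k" "summable a"
    and c: "\<And>k. prob_seq (c k)"
    and V: "\<And>m. norm (V m) \<le> 1"
  shows "(\<lambda>k. a k *\<^sub>R (\<Sum>m. c k m *\<^sub>R V m)) sums (\<Sum>m. (\<Sum>k. a k * c k m) *\<^sub>R V m)"
    and "summable (\<lambda>m. (\<Sum>k. a k * c k m) *\<^sub>R V m)"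
proof -
  define f where "f = (\<lambda>(k, m). (a k * c k m) *\<^sub>R V m)"
  obtain S where S: "(f has_sum S) (UNIV \<times> UNIV)"
    using mixture_summable_on[where a=a and c=c and V=V, OF a c V] by (auto simp: f_def summable_on_def)
  have rows: "((\<lambda>m. f (k, m)) has_sum a k *\<^sub>R (\<Sum>m. c k m *\<^sub>R V m)) UNIV" for k
  proof -
    have norm_summable: "summable (\<lambda>m. norm (c k m *\<^sub>R V m))"
      by (rule prob_seq_summable_norm_scaleR[OF c V])
    then have "((\<lambda>m. c k m *\<^sub>R V m) has_sum (\<Sum>m. c k m *\<^sub>R V m)) UNIV"
      by (rule norm_summable_imp_has_sum[OF _ summable_sums[OF summable_norm_cancel[OF norm_summable]]])
    from has_sum_scaleR[OF this, of "a k"] show ?thesis by (simp add: f_def)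
  qed
  have cols: "((\<lambda>k. f (k, m)) has_sum (\<Sum>k. a k * c k m) *\<^sub>R V m) UNIV" for m
  proof -
    have "summable (\<lambda>k. a k * c k m)"
      by (rule summable_comparison_test[OF _ a(2)])
        (use a prob_seq_nonneg[OF c] prob_seq_le_1[OF c] in \<open>auto intro!: exI[of _ 0] mult_left_le\<close>)
    then have "((\<lambda>k. a k * c k m) has_sum (\<Sum>k. a k * c k m)) UNIV"
      using a prob_seq_nonneg[OF c] by (intro sums_nonneg_imp_has_sum summable_sums) auto
    from has_sum_bounded_linear[OF bounded_linear_scaleR_left this] show ?thesis
      by (simp add: f_def)
  qed
  have "((\<lambda>k. a k *\<^sub>R (\<Sum>m. c k m *\<^sub>R V m)) has_sum S) UNIV"
    by (rule has_sum_SigmaD[OF S], rule rows)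
  moreover have "((\<lambda>m. (\<Sum>k. a k * c k m) *\<^sub>R V m) has_sum S) UNIV"
    by (rule has_sum_SigmaD[OF has_sum_swap[THEN iffD1, OF S]]) (use cols in simp)
  then have "(\<lambda>m. (\<Sum>k. a k * c k m) *\<^sub>R V m) sums S"
    by (rule has_sum_imp_sums)
  ultimately show "(\<lambda>k. a k *\<^sub>R (\<Sum>m. c k m *\<^sub>R V m)) sums (\<Sum>m. (\<Sum>k. a k * c k m) *\<^sub>R V m)"
    and "summable (\<lambda>m. (\<Sum>k. a k * c k m) *\<^sub>R V m)"
    by (simp_all add: has_sum_imp_sums sums_unique[symmetric] sums_summable)
qed

definition cauchy_prod :: "(nat \<Rightarrow> real) \<Rightarrow> (nat \<Rightarrow> real) \<Rightarrow> nat \<Rightarrow> real" where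
  "cauchy_prod p q m = (\<Sum>i\<le>m. p i * q (m - i))"

primrec cauchy_power :: "(nat \<Rightarrow> real) \<Rightarrow> nat \<Rightarrow> nat \<Rightarrow> real" where
  "cauchy_power q 0 = (\<lambda>m. if m = 0 then 1 else 0)"
| "cauchy_power q (Suc k) = cauchy_prod q (cauchy_power q k)"

definition compose_seq :: "(nat \<Rightarrow> real) \<Rightarrow> (nat \<Rightarrow> real) \<Rightarrow> nat \<Rightarrow> real" where
  "compose_seq a q m = (\<Sum>k. a k * cauchy_power q k m)"

text \<open>The distribution of the \<open>n\<close>-th generation of a Galton--Watson process with
  offspring distribution \<open>a\<close> started from one individual.\<close>

primrec generation :: "(nat \<Rightarrow> real) \<Rightarrow> nat \<Rightarrow> nat \<Rightarrow> real" where
  "generation a 0 = (\<lambda>m. if m = 1 then 1 else 0)"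
| "generation a (Suc n) = compose_seq a (generation a n)"

lemma prob_seq_cauchy_prod:
  assumes p: "prob_seq p" and q: "prob_seq q"
  shows "prob_seq (cauchy_prod p q)"
proof -
  have "summable (\<lambda>m. norm (r m))" if "prob_seq r" for r
    using prob_seq_summable[OF that] prob_seq_nonneg[OF that] by simp
  then have "cauchy_prod p q sums (suminf p * suminf q)"
    unfolding cauchy_prod_def using p q by (intro Cauchy_product_sums)
  then show ?thesis
    using p q by (auto simp: prob_seq_def prob_seq_suminf cauchy_prod_def intro!: sum_nonneg)
qed

lemma prob_seq_cauchy_power: "prob_seq q \<Longrightarrow> prob_seq (cauchy_power q k)"
  by (induction k) (simp_all add: prob_seq_delta prob_seq_cauchy_prod)

lemma prob_seq_compose_seq:
  assumes a: "prob_seq a" and q: "prob_seq q"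
  shows "prob_seq (compose_seq a q)"
proof -
  note mix = mixture_sums[where V="\<lambda>_. 1::real" and c="cauchy_power q",
      OF prob_seq_nonneg[OF a] prob_seq_summable[OF a] prob_seq_cauchy_power[OF q]]
  have "(\<lambda>k. a k) sums (\<Sum>m. compose_seq a q m)"
    using mix(1) by (simp add: prob_seq_suminf[OF prob_seq_cauchy_power[OF q]] compose_seq_def)
  then have "(\<Sum>m. compose_seq a q m) = 1"
    using a by (simp add: prob_seq_def sums_unique2)
  moreover have "0 \<le> compose_seq a q m" for m
    unfolding compose_seq_def
  proof (rule suminf_nonneg)
    show "summable (\<lambda>k. a k * cauchy_power q k m)"
      by (rule summable_comparison_test[OF _ prob_seq_summable[OF a]])
        (use a prob_seq_nonneg prob_seq_cauchy_power[OF q] prob_seq_le_1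
          in \<open>auto intro!: exI[of _ 0] mult_left_le\<close>)
  qed (use a q prob_seq_nonneg prob_seq_cauchy_power in auto)
  ultimately show ?thesis
    using mix(2) by (simp add: prob_seq_def compose_seq_def[abs_def] summable_sums_iff)
qed

lemma prob_seq_generation: "prob_seq a \<Longrightarrow> prob_seq (generation a n)"
  by (induction n) (simp_all add: prob_seq_delta prob_seq_compose_seq)

definition pgf :: "(nat \<Rightarrow> real) \<Rightarrow> 'b::{real_normed_field,banach} \<Rightarrow> 'b" where
  "pgf q s = (\<Sum>m. q m *\<^sub>R s ^ m)"

lemma pgf_delta: "pgf (\<lambda>m. if m = j then 1 else 0) s = s ^ j"
  unfolding pgf_def by (subst suminf_finite[of "{j}"]) auto

lemma summable_norm_pgf:
  fixes s :: "'b::real_normed_div_algebra"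
  shows "prob_seq q \<Longrightarrow> norm s \<le> 1 \<Longrightarrow> summable (\<lambda>m. norm (q m *\<^sub>R s ^ m))"
  by (rule prob_seq_summable_norm_scaleR[where B=1]) (simp_all add: norm_power power_le_one)

lemma norm_pgf_le_1:
  assumes q: "prob_seq q" and s: "norm s \<le> 1"
  shows "norm (pgf q s) \<le> 1"
proof -
  have "norm (pgf q s) \<le> (\<Sum>m. norm (q m *\<^sub>R s ^ m))"
    unfolding pgf_def by (rule summable_norm[OF summable_norm_pgf[OF q s]])
  also have "\<dots> \<le> (\<Sum>m. q m)"
    using q s by (intro suminf_le summable_norm_pgf prob_seq_summable)
      (auto simp: prob_seq_nonneg norm_power power_le_one intro: mult_left_le)
  finally show ?thesis by (simp add: prob_seq_suminf[OF q])
qed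

lemma norm_pgf_minus_head_le:
  fixes z :: "'b::{real_normed_field,banach}"
  assumes q: "prob_seq q" and z: "norm z \<le> 1"
  shows "norm (pgf q z - of_real (q 0)) \<le> pgf q (norm z) - q 0"
proof -
  have ns: "summable (\<lambda>m. norm (q m *\<^sub>R z ^ m))"
    by (rule summable_norm_pgf[OF q z])
  have ns': "summable (\<lambda>m. norm (q (Suc m) *\<^sub>R z ^ Suc m))"
    using summable_ignore_initial_segment[OF ns, of 1] by simp
  have "pgf q z - of_real (q 0) = (\<Sum>m. q (Suc m) *\<^sub>R z ^ Suc m)"
    using suminf_split_head[OF summable_norm_cancel[OF ns]] by (simp add: pgf_def scaleR_conv_of_real)
  then have "norm (pgf q z - of_real (q 0)) \<le> (\<Sum>m. q (Suc m) * norm z ^ Suc m)"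
    using summable_norm[OF ns'] by (simp add: norm_power norm_mult prob_seq_nonneg[OF q])
  also have "\<dots> = pgf q (norm z) - q 0"
    using suminf_split_head[OF summable_norm_cancel[OF summable_norm_pgf[OF q, of "norm z"]]] z
    by (simp add: pgf_def)
  finally show ?thesis .
qed

lemma pgf_mult:
  assumes "prob_seq p" "prob_seq q" "norm s \<le> 1"
  shows "pgf p s * pgf q s = pgf (cauchy_prod p q) s"
proof -
  have "pgf p s * pgf q s = (\<Sum>m. \<Sum>i\<le>m. (p i *\<^sub>R s ^ i) * (q (m - i) *\<^sub>R s ^ (m - i)))"
    unfolding pgf_def using assms by (intro Cauchy_product summable_norm_pgf)
  also have "\<dots> = pgf (cauchy_prod p q) s"
    unfolding pgf_def cauchy_prod_def scaleR_sum_left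
    by (intro suminf_cong sum.cong refl) (simp add: power_add[symmetric])
  finally show ?thesis .
qed

lemma pgf_power: "prob_seq q \<Longrightarrow> norm s \<le> 1 \<Longrightarrow> pgf q s ^ k = pgf (cauchy_power q k) s"
  by (induction k) (simp_all add: pgf_delta pgf_mult prob_seq_cauchy_power)

lemma pgf_pgf:
  assumes a: "prob_seq a" and q: "prob_seq q" and s: "norm s \<le> 1"
  shows "pgf a (pgf q s) = pgf (compose_seq a q) s"
proof -
  have "pgf a (pgf q s) = (\<Sum>k. a k *\<^sub>R pgf (cauchy_power q k) s)"
    using q s by (simp add: pgf_def[of a] pgf_power)
  also have "\<dots> = (\<Sum>k. a k *\<^sub>R (\<Sum>m. cauchy_power q k m *\<^sub>R s ^ m))"
    by (simp add: pgf_def)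
  also have "\<dots> = pgf (compose_seq a q) s"
    unfolding pgf_def compose_seq_def
    by (rule sums_unique[symmetric], rule mixture_sums)
      (use a q s in \<open>auto simp: prob_seq_nonneg prob_seq_summable prob_seq_cauchy_power
        norm_power power_le_one\<close>)
  finally show ?thesis .
qed

lemma funpow_pgf: "prob_seq a \<Longrightarrow> norm s \<le> 1 \<Longrightarrow> (pgf a ^^ n) s = pgf (generation a n) s"
  by (induction n) (simp_all add: pgf_delta pgf_pgf prob_seq_generation)

context finite_group
begin

lemma abs_gpow_le_1: "x \<in> gsimplex G \<Longrightarrow> \<bar>gpow G x m g\<bar> \<le> 1"
  using gsimplex_nonneg gsimplex_le_1 gpow_in_gsimplex by (simp add: abs_le_iff)

lemma summable_norm_pmap:
  "x \<in> gsimplex G \<Longrightarrow> prob_seq q \<Longrightarrow> summable (\<lambda>m. norm (q m * gpow G x m g))"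
  using prob_seq_summable_norm_scaleR[of q "\<lambda>m. gpow G x m g" 1] abs_gpow_le_1 by simp

lemma pmap_delta: "pmap G (\<lambda>m. if m = j then 1 else 0) x = gpow G x j"
  unfolding pmap_def by (rule ext, subst suminf_finite[of "{j}"]) auto

lemma gconv_pmap:
  assumes x: "x \<in> gsimplex G" and p: "prob_seq p" and q: "prob_seq q"
  shows "gconv G (pmap G p x) (pmap G q x) = pmap G (cauchy_prod p q) x"
proof
  fix g
  show "gconv G (pmap G p x) (pmap G q x) g = pmap G (cauchy_prod p q) x g"
  proof (cases "g \<in> carrier G")
    case False
    then show ?thesis
      using gpow_in_galg by (simp add: gconv_outside pmap_def galg_outside)
  next
    case g: True
    let ?t = "\<lambda>h m i. (p i * gpow G x i h) * (q (m - i) * gpow G x (m - i) (inv h \<otimes> g))"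
    have "gconv G (pmap G p x) (pmap G q x) g
        = (\<Sum>h\<in>carrier G. (\<Sum>m. p m * gpow G x m h) * (\<Sum>m. q m * gpow G x m (inv h \<otimes> g)))"
      using g by (simp add: gconv_apply pmap_def)
    also have "\<dots> = (\<Sum>h\<in>carrier G. \<Sum>m. \<Sum>i\<le>m. ?t h m i)"
      by (intro sum.cong refl Cauchy_product summable_norm_pmap x p q)
    also have "\<dots> = (\<Sum>m. \<Sum>h\<in>carrier G. \<Sum>i\<le>m. ?t h m i)"
      by (intro suminf_sum[symmetric] summable_Cauchy_product summable_norm_pmap x p q)
    also have "\<dots> = (\<Sum>m. cauchy_prod p q m * gpow G x m g)"
    proof (intro suminf_cong)
      fix m
      have "(\<Sum>h\<in>carrier G. \<Sum>i\<le>m. ?t h m i)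
          = (\<Sum>i\<le>m. p i * q (m - i) * gconv G (gpow G x i) (gpow G x (m - i)) g)"
        using g by (subst sum.swap) (simp add: gconv_apply sum_distrib_left mult_ac)
      also have "\<dots> = cauchy_prod p q m * gpow G x m g"
        by (simp add: gpow_add[symmetric] cauchy_prod_def sum_distrib_right)
      finally show "(\<Sum>h\<in>carrier G. \<Sum>i\<le>m. ?t h m i) = cauchy_prod p q m * gpow G x m g" .
    qed
    finally show ?thesis by (simp add: pmap_def)
  qed
qed

lemma gpow_pmap:
  "x \<in> gsimplex G \<Longrightarrow> prob_seq q \<Longrightarrow> gpow G (pmap G q x) k = pmap G (cauchy_power q k) x"
  by (induction k) (simp_all add: pmap_delta gconv_pmap prob_seq_cauchy_power)

lemma pmap_pmap:
  assumes x: "x \<in> gsimplex G" and a: "prob_seq a" and q: "prob_seq q"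
  shows "pmap G a (pmap G q x) = pmap G (compose_seq a q) x"
proof
  fix g
  have "(\<lambda>k. a k *\<^sub>R (\<Sum>m. cauchy_power q k m *\<^sub>R gpow G x m g))
      sums (\<Sum>m. (\<Sum>k. a k * cauchy_power q k m) *\<^sub>R gpow G x m g)"
    using abs_gpow_le_1[OF x]
    by (intro mixture_sums) (simp_all add: prob_seq_nonneg prob_seq_summable a q prob_seq_cauchy_power)
  then show "pmap G a (pmap G q x) g = pmap G (compose_seq a q) x g"
    using x q by (simp add: pmap_def[of G a] gpow_pmap sums_iff) (simp add: pmap_def compose_seq_def)
qed

lemma funpow_pmap:
  assumes x: "x \<in> gsimplex G" and a: "prob_seq a"
  shows "(pmap G a ^^ n) x = pmap G (generation a n) x"
proof (induction n)
  case 0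
  have "x \<in> galg" using x by (simp add: gsimplex_iff)
  then show ?case by (simp add: pmap_delta gconv_gunit_right)
next
  case (Suc n)
  then show ?case using pmap_pmap[OF x a prob_seq_generation[OF a]] by simp
qed

end

section \<open>Galton--Watson processes\<close>

text \<open>Dividing \<open>pgf a t - t\<close> by \<open>1 - t\<close> gives \<open>\<Sum>\<^sub>k a\<^sub>k \<cdot> excess_coeff k t\<close>, which is
  antitone in \<open>t\<close>; this replaces a convexity argument for \<open>pgf a t < t\<close> above the extinction
  probability.\<close>

definition excess_coeff :: "nat \<Rightarrow> real \<Rightarrow> real" where
  "excess_coeff k t = (if k = 0 then 1 else - (\<Sum>i\<in>{1..<k}. t ^ i))"

lemma one_minus_mult_excess_coeff: "(1 - t) * excess_coeff k t = t ^ k - t"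
proof (cases "k = 0")
  case False
  then have "(\<Sum>i<k. t ^ i) = 1 + (\<Sum>i\<in>{1..<k}. t ^ i)"
    by (simp add: lessThan_atLeast0 sum.atLeast_Suc_lessThan)
  then show ?thesis
    using one_diff_power_eq[of t k] False by (simp add: excess_coeff_def algebra_simps)
qed (simp add: excess_coeff_def)

lemma abs_excess_coeff_le:
  assumes "0 \<le> t" "t < 1"
  shows "\<bar>excess_coeff k t\<bar> \<le> 1 / (1 - t)"
proof -
  have "0 \<le> t ^ k" "t ^ k \<le> 1"
    using assms by (simp_all add: power_le_one)
  then have "\<bar>t ^ k - t\<bar> \<le> 1"
    unfolding abs_le_iff using assms by linarith
  then show ?thesis
    using assms one_minus_mult_excess_coeff[of t k] by (simp add: abs_mult field_simps)
qed

lemma excess_coeff_antimono: "0 \<le> s \<Longrightarrow> s \<le> t \<Longrightarrow> excess_coeff k t \<le> excess_coeff k s"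
  unfolding excess_coeff_def by (auto intro!: sum_mono power_mono)

lemma excess_coeff_strict_antimono:
  assumes "0 \<le> s" "s < t" "2 \<le> k"
  shows "excess_coeff k t < excess_coeff k s"
proof -
  have "(\<Sum>i\<in>{1..<k}. s ^ i) < (\<Sum>i\<in>{1..<k}. t ^ i)"
    using assms by (intro sum_strict_mono_ex1) (auto intro!: power_mono bexI[of _ 1])
  then show ?thesis using assms by (simp add: excess_coeff_def)
qed

lemma funpow_fixpoint: "f t = t \<Longrightarrow> (f ^^ n) t = t"
  by (induction n) auto

locale galton_watson =
  fixes a :: "nat \<Rightarrow> real"
  assumes prob_seq_offspring: "prob_seq a"
    and offspring_one_lt_1: "a 1 < 1"
begin

lemma offspring_nonneg: "0 \<le> a k"
  by (rule prob_seq_nonneg[OF prob_seq_offspring])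

lemma summable_offspring: "summable a"
  by (rule prob_seq_summable[OF prob_seq_offspring])

lemma suminf_offspring: "suminf a = 1"
  by (rule prob_seq_suminf[OF prob_seq_offspring])

lemma pgf_real: "pgf a t = (\<Sum>k. a k * t ^ k)"
  by (simp add: pgf_def)

lemma summable_pgf_real: "\<bar>t\<bar> \<le> 1 \<Longrightarrow> summable (\<lambda>k. a k * t ^ k)"
  using summable_norm_cancel[OF summable_norm_pgf[OF prob_seq_offspring, of t]] by simp

lemma pgf_mono: "0 \<le> (s::real) \<Longrightarrow> s \<le> t \<Longrightarrow> t \<le> 1 \<Longrightarrow> pgf a s \<le> pgf a t"
  unfolding pgf_real
  by (intro suminf_le summable_pgf_real) (auto intro!: mult_left_mono power_mono simp: offspring_nonneg)

lemma pgf_one: "pgf a (1::real) = 1"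
  by (simp add: pgf_real suminf_offspring)

lemma pgf_nonneg: "0 \<le> (t::real) \<Longrightarrow> t \<le> 1 \<Longrightarrow> 0 \<le> pgf a t"
  unfolding pgf_real by (intro suminf_nonneg summable_pgf_real) (auto simp: offspring_nonneg)

lemma funpow_pgf_range: "0 \<le> (t::real) \<Longrightarrow> t \<le> 1 \<Longrightarrow> 0 \<le> (pgf a ^^ n) t \<and> (pgf a ^^ n) t \<le> 1"
  by (induction n) (auto simp: pgf_nonneg pgf_one intro: order.trans[OF pgf_mono[of _ 1]])

lemma funpow_pgf_mono: "0 \<le> (s::real) \<Longrightarrow> s \<le> t \<Longrightarrow> t \<le> 1 \<Longrightarrow> (pgf a ^^ n) s \<le> (pgf a ^^ n) t"
  by (induction n) (auto intro!: pgf_mono simp: funpow_pgf_range)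

lemma isCont_pgf: "\<bar>t::real\<bar> < 1 \<Longrightarrow> isCont (pgf a) t"
  unfolding pgf_real[abs_def]
  by (rule isCont_powser[where K=1]) (use summable_offspring in auto)

definition extinction_prob :: real where
  "extinction_prob = lim (\<lambda>n. (pgf a ^^ n) 0)"

lemma extinction_prob_tendsto: "(\<lambda>n. (pgf a ^^ n) 0) \<longlonglongrightarrow> extinction_prob"
proof -
  have inc: "incseq (\<lambda>n. (pgf a ^^ n) (0::real))"
  proof (rule incseq_SucI)
    fix n
    have "(pgf a ^^ n) 0 \<le> (pgf a ^^ n) (pgf a (0::real))"
      using pgf_nonneg[of 0] pgf_mono[of 0 1] pgf_one by (intro funpow_pgf_mono) simp_all
    then show "(pgf a ^^ n) 0 \<le> (pgf a ^^ Suc n) (0::real)"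
      by (simp only: funpow_Suc_right o_apply)
  qed
  have "\<forall>n. (pgf a ^^ n) (0::real) \<le> 1"
    using funpow_pgf_range[of 0] by simp
  then obtain L where "(\<lambda>n. (pgf a ^^ n) 0) \<longlonglongrightarrow> (L::real)"
    using incseq_convergent[OF inc] by blast
  then show ?thesis by (simp add: extinction_prob_def limI)
qed

lemma extinction_prob_range: "0 \<le> extinction_prob" "extinction_prob \<le> 1"
  using LIMSEQ_le_const[OF extinction_prob_tendsto] LIMSEQ_le_const2[OF extinction_prob_tendsto]
    funpow_pgf_range[of 0] by simp_all

lemma pgf_extinction_prob: "extinction_prob < 1 \<Longrightarrow> pgf a extinction_prob = extinction_prob"
proof -
  assume q: "extinction_prob < 1"
  have "(\<lambda>n. pgf a ((pgf a ^^ n) 0)) \<longlonglongrightarrow> pgf a extinction_prob"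
    using isCont_pgf[of extinction_prob] q extinction_prob_range
    by (intro isCont_tendsto_compose[OF _ extinction_prob_tendsto]) auto
  moreover have "(\<lambda>n. pgf a ((pgf a ^^ n) 0)) \<longlonglongrightarrow> extinction_prob"
    using LIMSEQ_Suc[OF extinction_prob_tendsto] by simp
  ultimately show ?thesis using LIMSEQ_unique by blast
qed

definition excess_ratio :: "real \<Rightarrow> real" where
  "excess_ratio t = (\<Sum>k. a k * excess_coeff k t)"

lemma summable_excess_ratio:
  assumes "0 \<le> t" "t < 1"
  shows "summable (\<lambda>k. a k * excess_coeff k t)"
  using prob_seq_summable_mult[OF prob_seq_offspring abs_excess_coeff_le[OF assms]] .

lemma pgf_minus_self:
  assumes "0 \<le> t" "t < 1"
  shows "pgf a t - t = (1 - t) * excess_ratio t"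
proof -
  have "pgf a t - t = (\<Sum>k. a k * t ^ k) - (\<Sum>k. a k * t)"
    using suminf_mult2[OF summable_offspring, of t] by (simp add: pgf_real suminf_offspring)
  also have "\<dots> = (\<Sum>k. a k * t ^ k - a k * t)"
    using assms by (intro suminf_diff summable_pgf_real summable_mult2[OF summable_offspring]) simp
  also have "\<dots> = (\<Sum>k. (1 - t) * (a k * excess_coeff k t))"
    by (simp add: one_minus_mult_excess_coeff mult.left_commute[of "1 - t"] right_diff_distrib)
  also have "\<dots> = (1 - t) * excess_ratio t"
    unfolding excess_ratio_def by (rule suminf_mult[OF summable_excess_ratio[OF assms]])
  finally show ?thesis .
qed

lemma excess_ratio_extinction_prob:
  "extinction_prob < 1 \<Longrightarrow> excess_ratio extinction_prob = 0"
  using pgf_minus_self[of extinction_prob] pgf_extinction_prob extinction_prob_range by simp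

lemma offspring_ex_ge_2:
  assumes q: "extinction_prob < 1"
  shows "\<exists>k\<ge>2. 0 < a k"
proof (rule ccontr)
  assume "\<not> ?thesis"
  then have vanish: "a k = 0" if "k \<notin> {0, 1}" for k
    using that offspring_nonneg[of k]
    by (metis One_nat_def insertCI less_2_cases not_le order.not_eq_order_implies_strict)
  have "excess_ratio extinction_prob = (\<Sum>k\<in>{0, 1}. a k * excess_coeff k extinction_prob)"
    unfolding excess_ratio_def by (rule suminf_finite) (use vanish in auto)
  moreover have "suminf a = (\<Sum>k\<in>{0, 1}. a k)"
    by (rule suminf_finite) (use vanish in auto)
  ultimately have "a 0 = 0" "a 0 + a 1 = 1"
    using excess_ratio_extinction_prob[OF q] suminf_offspring by (simp_all add: excess_coeff_def)
  then show False using offspring_one_lt_1 by simp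
qed

lemma pgf_less_self:
  assumes t: "extinction_prob < t" "t < 1"
  shows "pgf a t < t"
proof -
  have q: "extinction_prob < 1" "0 \<le> extinction_prob" using t extinction_prob_range by auto
  obtain k0 where k0: "2 \<le> k0" "0 < a k0" using offspring_ex_ge_2[OF q(1)] by blast
  have "0 < (\<Sum>k. a k * excess_coeff k extinction_prob - a k * excess_coeff k t)"
  proof (rule suminf_pos2)
    show "summable (\<lambda>k. a k * excess_coeff k extinction_prob - a k * excess_coeff k t)"
      using q t by (intro summable_diff summable_excess_ratio) auto
    show "0 \<le> a k * excess_coeff k extinction_prob - a k * excess_coeff k t" for k
      using excess_coeff_antimono[of extinction_prob t k] offspring_nonneg[of k] q t
      by (simp add: right_diff_distrib[symmetric])
    show "0 < a k0 * excess_coeff k0 extinction_prob - a k0 * excess_coeff k0 t"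
      using excess_coeff_strict_antimono[of extinction_prob t k0] k0 q t
      by (simp add: right_diff_distrib[symmetric])
  qed
  also have "\<dots> = excess_ratio extinction_prob - excess_ratio t"
    unfolding excess_ratio_def using q t by (intro suminf_diff[symmetric] summable_excess_ratio) auto
  finally have "(1 - t) * excess_ratio t < 0"
    using excess_ratio_extinction_prob[OF q(1)] t by (simp add: mult_pos_neg)
  then show ?thesis using pgf_minus_self[of t] t q by simp
qed

lemma funpow_pgf_extinction_prob: "(pgf a ^^ n) extinction_prob = extinction_prob"
  using pgf_extinction_prob pgf_one extinction_prob_range
  by (intro funpow_fixpoint) (cases "extinction_prob < 1"; simp)

lemma funpow_pgf_tendsto_above:
  assumes r: "extinction_prob < r" "r < 1"
  shows "(\<lambda>n. (pgf a ^^ n) r) \<longlonglongrightarrow> extinction_prob"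
proof -
  define v where "v n = (pgf a ^^ n) r" for n
  have v_ge: "extinction_prob \<le> v n" for n
    using funpow_pgf_mono[of extinction_prob r n] r extinction_prob_range
    by (simp add: v_def funpow_pgf_extinction_prob)
  have "v (Suc n) \<le> v n" for n
  proof -
    have "(pgf a ^^ n) (pgf a r) \<le> (pgf a ^^ n) r"
      using pgf_less_self[OF r] pgf_nonneg extinction_prob_range r by (intro funpow_pgf_mono) auto
    then show ?thesis by (simp only: v_def funpow_Suc_right o_apply)
  qed
  then obtain L where L: "v \<longlonglongrightarrow> L" "\<And>n. L \<le> v n"
    using decseq_convergent[of v extinction_prob] v_ge decseq_SucI by metis
  have L_range: "extinction_prob \<le> L" "L < 1"
    using LIMSEQ_le_const[OF L(1)] v_ge L(2)[of 0] r by (auto simp: v_def)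
  have "(\<lambda>n. pgf a (v n)) \<longlonglongrightarrow> pgf a L"
    using isCont_pgf[of L] L_range extinction_prob_range by (intro isCont_tendsto_compose[OF _ L(1)]) auto
  moreover have "(\<lambda>n. pgf a (v n)) \<longlonglongrightarrow> L"
    using LIMSEQ_Suc[OF L(1)] by (simp add: v_def)
  ultimately have "pgf a L = L" using LIMSEQ_unique by blast
  then have "L = extinction_prob"
    using pgf_less_self[of L] L_range by fastforce
  then show ?thesis using L(1) by (simp add: v_def[abs_def])
qed

lemma funpow_pgf_tendsto:
  assumes r: "0 \<le> r" "r < 1"
  shows "(\<lambda>n. (pgf a ^^ n) r) \<longlonglongrightarrow> extinction_prob"
proof (cases "r \<le> extinction_prob")
  case True
  then have "(pgf a ^^ n) r \<le> extinction_prob" for n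
    using funpow_pgf_mono[of r extinction_prob n] r extinction_prob_range
    by (simp add: funpow_pgf_extinction_prob)
  moreover have "(pgf a ^^ n) 0 \<le> (pgf a ^^ n) r" for n
    using r by (intro funpow_pgf_mono) auto
  ultimately show ?thesis
    by (intro tendsto_sandwich[OF _ _ extinction_prob_tendsto tendsto_const] always_eventually allI)
next
  case False
  then show ?thesis using r by (intro funpow_pgf_tendsto_above) auto
qed

lemma generation_zero: "generation a n 0 = (pgf a ^^ n) (0::real)"
proof -
  have "pgf (generation a n) (0::real) = generation a n 0"
    unfolding pgf_def by (subst suminf_finite[of "{0}"]) auto
  then show ?thesis by (simp add: funpow_pgf prob_seq_offspring)
qed

lemma funpow_pgf_tendsto_disc:
  fixes z :: "'b::{real_normed_field,banach}"
  assumes z: "norm z < 1"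
  shows "(\<lambda>n. (pgf a ^^ n) z) \<longlonglongrightarrow> of_real extinction_prob"
proof -
  have bound: "norm ((pgf a ^^ n) z - of_real ((pgf a ^^ n) 0)) \<le> (pgf a ^^ n) (norm z) - (pgf a ^^ n) 0"
    for n
  proof -
    have "(pgf a ^^ n) z = pgf (generation a n) z" "(pgf a ^^ n) (norm z) = pgf (generation a n) (norm z)"
      using z by (simp_all add: funpow_pgf prob_seq_offspring)
    then show ?thesis
      using norm_pgf_minus_head_le[OF prob_seq_generation[OF prob_seq_offspring], of z n] z
      by (simp add: generation_zero)
  qed
  have "(\<lambda>n. (pgf a ^^ n) (norm z) - (pgf a ^^ n) 0) \<longlonglongrightarrow> extinction_prob - extinction_prob"
    using z by (intro tendsto_diff funpow_pgf_tendsto extinction_prob_tendsto) auto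
  then have "(\<lambda>n. (pgf a ^^ n) z - of_real ((pgf a ^^ n) 0)) \<longlonglongrightarrow> 0"
    by (intro Lim_null_comparison[OF always_eventually[OF allI[OF bound]]]) simp
  moreover have "(\<lambda>n. of_real ((pgf a ^^ n) 0) :: 'b) \<longlonglongrightarrow> of_real extinction_prob"
    by (intro tendsto_of_real extinction_prob_tendsto)
  ultimately have "(\<lambda>n. ((pgf a ^^ n) z - of_real ((pgf a ^^ n) 0)) + of_real ((pgf a ^^ n) 0))
      \<longlonglongrightarrow> 0 + of_real extinction_prob"
    by (rule tendsto_add)
  then show ?thesis by simp
qed

lemma offspring_ex_pos: "\<exists>k. 0 < a k"
proof (rule ccontr)
  assume "\<not> ?thesis"
  then have "a = (\<lambda>_. 0)"
    using offspring_nonneg by (simp add: fun_eq_iff not_less order.antisym)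
  then show False using suminf_offspring by simp
qed

lemma pgf_unimodular_eq_power:
  fixes z :: complex
  assumes z: "norm z = 1" and w1: "norm (pgf a z) = 1" and k: "0 < a k"
  shows "z ^ k = pgf a z"
proof -
  define w where "w = pgf a z"
  have ww: "w * cnj w = 1"
    using w1 complex_norm_square[of w] by (simp add: w_def)
  define v where "v j = cnj w * z ^ j" for j
  have nv: "norm (v j) = 1" for j using z w1 by (simp add: v_def w_def norm_mult norm_power)
  have sz: "summable (\<lambda>j. a j *\<^sub>R z ^ j)"
    using summable_norm_cancel[OF summable_norm_pgf[OF prob_seq_offspring, of z]] z by simp
  have sv: "summable (\<lambda>j. a j *\<^sub>R v j)"
    using summable_norm_cancel[OF prob_seq_summable_norm_scaleR[OF prob_seq_offspring, of v 1]] nv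
    by simp
  have "(\<Sum>j. a j *\<^sub>R v j) = (\<Sum>j. cnj w * (a j *\<^sub>R z ^ j))"
    by (simp add: v_def)
  also have "\<dots> = cnj w * w"
    using suminf_mult[OF sz, of "cnj w"] by (simp add: w_def pgf_def)
  finally have "(\<Sum>j. a j *\<^sub>R v j) = 1" using ww by (simp add: mult.commute)
  then have "(\<Sum>j. a j * Re (v j)) = 1"
    using bounded_linear.suminf[OF bounded_linear_Re sv] by simp
  then have "(\<Sum>j. a j - a j * Re (v j)) = 0"
    using suminf_diff[OF summable_offspring summable_Re[OF sv]] suminf_offspring by simp
  moreover have "0 \<le> a j - a j * Re (v j)" for j
    using complex_Re_le_cmod[of "v j"] nv[of j] offspring_nonneg[of j] by (simp add: mult_left_le)
  moreover have "summable (\<lambda>j. a j - a j * Re (v j))"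
    using summable_diff[OF summable_offspring summable_Re[OF sv]] by simp
  ultimately have "a k - a k * Re (v k) = 0"
    by (simp add: suminf_eq_zero_iff)
  then have "Re (v k) = 1" using k by simp
  then have "v k = 1"
    using Im_eq_0[of "v k"] nv[of k] by (simp add: complex_eq_iff)
  have "z ^ k = (w * cnj w) * z ^ k" using ww by simp
  also have "\<dots> = w * v k" by (simp add: v_def mult.assoc)
  also have "\<dots> = pgf a z" using \<open>v k = 1\<close> by (simp add: w_def)
  finally show ?thesis .
qed

lemma pgf_root_of_unity:
  fixes z :: complex
  assumes T: "0 < T" and zT: "z ^ T = 1" and w1: "norm (pgf a z) = 1"
  shows "pgf a z ^ T = 1"
proof -
  obtain k where "0 < a k" using offspring_ex_pos by blast
  moreover have "norm z = 1" using power_eq_1_iff[OF zT] T by auto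
  ultimately have "pgf a z ^ T = (z ^ T) ^ k"
    using pgf_unimodular_eq_power[of z k] w1 by (metis power_mult mult.commute)
  then show ?thesis using zT by simp
qed

end

section \<open>Sequences convergent along residue classes\<close>

definition residue_convergent :: "(nat \<Rightarrow> 'b::topological_space) \<Rightarrow> bool" where
  "residue_convergent s \<longleftrightarrow> (\<exists>P>0. \<forall>r. convergent (\<lambda>j. s (j * P + r)))"

lemma residue_convergentI:
  "0 < P \<Longrightarrow> (\<And>r. convergent (\<lambda>j. s (j * P + r))) \<Longrightarrow> residue_convergent s"
  unfolding residue_convergent_def by blast

lemma residue_convergentE:
  assumes "residue_convergent s"
  obtains P where "0 < P" "\<And>r. convergent (\<lambda>j. s (j * P + r))"
  using assms unfolding residue_convergent_def by blast

lemma convergent_residue_classes_mult: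
  assumes "\<And>r. convergent (\<lambda>j. s (j * P + r))" "0 < k"
  shows "convergent (\<lambda>j. s (j * (P * k) + r))"
proof -
  have "strict_mono (\<lambda>j::nat. j * k)" using assms(2) by (auto intro!: strict_monoI)
  from convergent_subseq_convergent[OF assms(1) this] show ?thesis
    by (simp add: o_def mult_ac)
qed

lemma convergent_imp_residue_convergent: "convergent s \<Longrightarrow> residue_convergent s"
  by (rule residue_convergentI[of 1]) (simp_all add: convergent_ignore_initial_segment)

lemma residue_convergent_const: "residue_convergent (\<lambda>n. c)"
  by (simp add: convergent_imp_residue_convergent convergent_const)

lemma residue_convergent_binop:
  assumes "residue_convergent s" "residue_convergent t"
    and h: "\<And>X Y. convergent X \<Longrightarrow> convergent Y \<Longrightarrow> convergent (\<lambda>n. h (X n) (Y n))"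
  shows "residue_convergent (\<lambda>n. h (s n) (t n))"
proof -
  obtain P where "0 < P" "\<And>r. convergent (\<lambda>j. s (j * P + r))"
    using assms(1) unfolding residue_convergent_def by blast
  moreover obtain Q where "0 < Q" "\<And>r. convergent (\<lambda>j. t (j * Q + r))"
    using assms(2) unfolding residue_convergent_def by blast
  ultimately show ?thesis
    using convergent_residue_classes_mult[of s P Q] convergent_residue_classes_mult[of t Q P]
    by (intro residue_convergentI[of "P * Q"] h) (auto simp: mult.commute)
qed

lemma residue_convergent_add:
  fixes s t :: "nat \<Rightarrow> 'b::real_normed_vector"
  shows "residue_convergent s \<Longrightarrow> residue_convergent t \<Longrightarrow> residue_convergent (\<lambda>n. s n + t n)"
  by (rule residue_convergent_binop) (auto simp: convergent_add)

lemma residue_convergent_mult: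
  fixes s t :: "nat \<Rightarrow> 'b::real_normed_algebra"
  shows "residue_convergent s \<Longrightarrow> residue_convergent t \<Longrightarrow> residue_convergent (\<lambda>n. s n * t n)"
  by (rule residue_convergent_binop) (auto simp: convergent_def intro: tendsto_mult)

lemma residue_convergent_sum:
  fixes s :: "'i \<Rightarrow> nat \<Rightarrow> 'b::real_normed_vector"
  shows "(\<And>i. i \<in> I \<Longrightarrow> residue_convergent (s i)) \<Longrightarrow> residue_convergent (\<lambda>n. \<Sum>i\<in>I. s i n)"
  by (induction I rule: infinite_finite_induct)
    (auto intro!: residue_convergent_add residue_convergent_const)

lemma residue_convergent_Re:
  assumes "residue_convergent s"
  shows "residue_convergent (\<lambda>n. Re (s n))"
proof -
  obtain P where P: "0 < P" "\<And>r. convergent (\<lambda>j. s (j * P + r))"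
    using assms unfolding residue_convergent_def by blast
  have "convergent (\<lambda>j. Re (s (j * P + r)))" for r
    using P(2)[of r] tendsto_Re unfolding convergent_def by blast
  with P(1) show ?thesis by (rule residue_convergentI)
qed

lemma residue_convergent_shift:
  assumes "residue_convergent (\<lambda>n. s (n + N))"
  shows "residue_convergent s"
proof -
  obtain P where P: "0 < P" "\<And>r. convergent (\<lambda>j. s (j * P + r + N))"
    using assms unfolding residue_convergent_def by blast
  then obtain P' where P': "P = Suc P'" using not0_implies_Suc by blast
  have "convergent (\<lambda>j. s (j * P + r))" for r
  proof -
    have "s ((j + N) * P + r) = s (j * P + (r + P' * N) + N)" for j
      unfolding P' by (simp add: algebra_simps)
    then have "convergent (\<lambda>j. s ((j + N) * P + r))"
      using P(2)[of "r + P' * N"] by (simp only:)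
    then show ?thesis
      using convergent_ignore_initial_segment[of "\<lambda>j. s (j * P + r)" N] by simp
  qed
  then show ?thesis using P(1) by (intro residue_convergentI)
qed

lemma residue_convergent_Suc:
  assumes "residue_convergent s"
  shows "residue_convergent (\<lambda>n. s (Suc n))"
proof -
  obtain P where P: "0 < P" "\<And>r. convergent (\<lambda>j. s (j * P + r))"
    using assms unfolding residue_convergent_def by blast
  have "convergent (\<lambda>j. s (Suc (j * P + r)))" for r
    using P(2)[of "Suc r"] by simp
  with P(1) show ?thesis by (rule residue_convergentI)
qed

lemma residue_convergent_eventually_periodic:
  assumes P: "0 < P" and per: "\<And>n. N \<le> n \<Longrightarrow> s (n + P) = s n"
  shows "residue_convergent s"
proof (rule residue_convergentI[OF P])
  fix r
  have "s ((j + N) * P + r) = s (N * P + r)" for j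
  proof (induction j)
    case (Suc j)
    have "N \<le> (j + N) * P + r"
      using mult_le_mono[of N "j + N" 1 P] P by simp
    have "s ((Suc j + N) * P + r) = s ((j + N) * P + r + P)"
      by (simp add: algebra_simps)
    also have "\<dots> = s ((j + N) * P + r)"
      using per \<open>N \<le> (j + N) * P + r\<close> by blast
    finally show ?case using Suc by simp
  qed simp
  then have "convergent (\<lambda>j. s ((j + N) * P + r))" by (simp add: convergent_const)
  then show "convergent (\<lambda>j. s (j * P + r))"
    using convergent_ignore_initial_segment[of "\<lambda>j. s (j * P + r)" N] by simp
qed

lemma cesaro_null:
  fixes e :: "nat \<Rightarrow> real"
  assumes "e \<longlonglongrightarrow> 0"
  shows "(\<lambda>n. (\<Sum>i<n. e i) / real n) \<longlonglongrightarrow> 0"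
proof (rule tendstoI)
  fix \<epsilon> :: real assume \<epsilon>: "0 < \<epsilon>"
  obtain N where N: "\<And>i. N \<le> i \<Longrightarrow> \<bar>e i\<bar> < \<epsilon> / 2"
    using LIMSEQ_D[OF assms, of "\<epsilon> / 2"] \<epsilon> by auto
  define M where "M = (\<Sum>i<N. \<bar>e i\<bar>)"
  have "0 \<le> M" by (simp add: M_def sum_nonneg)
  then have "\<forall>\<^sub>F n in sequentially. M / real n < \<epsilon> / 2"
    using tendstoD[OF lim_const_over_n[of M], of "\<epsilon> / 2"] \<epsilon> by (simp add: dist_real_def)
  then show "\<forall>\<^sub>F n in sequentially. dist ((\<Sum>i<n. e i) / real n) 0 < \<epsilon>"
    using eventually_ge_at_top[of "Suc N"]
  proof eventually_elim
    case (elim n)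
    have "\<bar>\<Sum>i<n. e i\<bar> \<le> (\<Sum>i<n. \<bar>e i\<bar>)" by (rule sum_abs)
    also have "\<dots> = M + (\<Sum>i\<in>{N..<n}. \<bar>e i\<bar>)"
      using elim by (simp add: M_def lessThan_atLeast0 sum.atLeastLessThan_concat)
    also have "(\<Sum>i\<in>{N..<n}. \<bar>e i\<bar>) \<le> (\<Sum>i\<in>{N..<n}. \<epsilon> / 2)"
      using N by (intro sum_mono) (simp add: less_imp_le)
    also have "\<dots> \<le> real n * (\<epsilon> / 2)"
      using \<epsilon> by (simp add: mult_right_mono)
    finally have "\<bar>\<Sum>i<n. e i\<bar> / real n < \<epsilon>"
      using elim by (simp add: field_simps)
    then show ?case by simp
  qed
qed

lemma sum_mod_add_period:
  fixes P n :: nat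
  assumes P: "0 < P"
  shows "(\<Sum>i<n + P. L (i mod P)) = (\<Sum>i<n. L (i mod P)) + (\<Sum>r<P. L r)"
proof (induction n)
  case 0
  have "(\<Sum>i<P. L (i mod P)) = (\<Sum>i<P. L i)" by (rule sum.cong) auto
  then show ?case by simp
next
  case (Suc n)
  have "(\<Sum>i<Suc n + P. L (i mod P)) = (\<Sum>i<n + P. L (i mod P)) + L (n mod P)"
    by simp
  then show ?case using Suc by (simp add: algebra_simps)
qed

lemma cesaro_periodic:
  fixes L :: "nat \<Rightarrow> real"
  assumes P: "0 < P"
  shows "(\<lambda>n. (\<Sum>i<n. L (i mod P)) / real n) \<longlonglongrightarrow> (\<Sum>r<P. L r) / real P"
proof -
  define \<Lambda> where "\<Lambda> = (\<Sum>r<P. L r)"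
  define f where "f n = (\<Sum>i<n. L (i mod P)) - real n * \<Lambda> / real P" for n
  have f_periodic: "f (n + P) = f n" for n
    unfolding f_def sum_mod_add_period[OF P] \<Lambda>_def[symmetric] using P by (simp add: field_simps)
  have f_mod: "f n = f (n mod P)" for n
  proof (induction n rule: less_induct)
    case (less n)
    show ?case
    proof (cases "n < P")
      case False
      then have "f n = f (n - P)" using f_periodic[of "n - P"] by simp
      also have "\<dots> = f ((n - P) mod P)" using less[of "n - P"] P False by simp
      also have "(n - P) mod P = n mod P" using False by (simp add: le_mod_geq[symmetric])
      finally show ?thesis .
    qed simp
  qed
  define B where "B = (\<Sum>r<P. \<bar>f r\<bar>)"
  have "\<bar>f n\<bar> \<le> B" for n
  proof -
    have "\<bar>f (n mod P)\<bar> \<le> B"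
      unfolding B_def using P by (intro member_le_sum) auto
    then show ?thesis using f_mod[of n] by simp
  qed
  then have "(\<lambda>n. f n / real n) \<longlonglongrightarrow> 0"
    by (intro Lim_null_comparison[OF always_eventually lim_const_over_n[of B]] allI)
      (simp add: divide_right_mono)
  then have "(\<lambda>n. f n / real n + \<Lambda> / real P) \<longlonglongrightarrow> 0 + \<Lambda> / real P"
    by (intro tendsto_add tendsto_const)
  moreover have "\<forall>\<^sub>F n in sequentially. f n / real n + \<Lambda> / real P = (\<Sum>i<n. L (i mod P)) / real n"
    using eventually_gt_at_top[of 0] by eventually_elim (simp add: f_def field_simps)
  ultimately show ?thesis
    unfolding \<Lambda>_def by (simp add: Lim_transform_eventually)
qed

lemma residue_convergent_cesaro:
  fixes s :: "nat \<Rightarrow> real"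
  assumes "residue_convergent s"
  shows "convergent (\<lambda>n. (\<Sum>i<n. s i) / real n)"
proof -
  obtain P where P: "0 < P" "\<And>r. convergent (\<lambda>j. s (j * P + r))"
    using assms by (auto elim: residue_convergentE)
  define L where "L r = lim (\<lambda>j. s (j * P + r))" for r
  have L: "(\<lambda>j. s (j * P + r)) \<longlonglongrightarrow> L r" for r
    using P(2) by (simp add: L_def convergent_LIMSEQ_iff)
  define e where "e i = s i - L (i mod P)" for i
  have "e \<longlonglongrightarrow> 0"
  proof (rule tendstoI)
    fix \<epsilon> :: real assume "0 < \<epsilon>"
    then have "\<forall>r\<in>{..<P}. \<forall>\<^sub>F j in sequentially. dist (s (j * P + r)) (L r) < \<epsilon>"
      using L tendstoD by blast
    then have "\<forall>\<^sub>F j in sequentially. \<forall>r\<in>{..<P}. dist (s (j * P + r)) (L r) < \<epsilon>"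
      by (rule eventually_ball_finite[OF finite_lessThan])
    then obtain J where J: "\<And>j r. J \<le> j \<Longrightarrow> r < P \<Longrightarrow> dist (s (j * P + r)) (L r) < \<epsilon>"
      by (auto simp: eventually_sequentially)
    have "dist (e n) 0 < \<epsilon>" if "J * P \<le> n" for n
    proof -
      have "J \<le> n div P" using that P(1) by (metis div_le_mono div_mult_self_is_m)
      then show ?thesis using J[of "n div P" "n mod P"] P(1) by (simp add: e_def dist_real_def)
    qed
    then show "\<forall>\<^sub>F n in sequentially. dist (e n) 0 < \<epsilon>"
      by (auto simp: eventually_sequentially)
  qed
  then have "(\<lambda>n. (\<Sum>i<n. e i) / real n + (\<Sum>i<n. L (i mod P)) / real n) \<longlonglongrightarrow> 0 + (\<Sum>r<P. L r) / real P"
    by (intro tendsto_add cesaro_null cesaro_periodic P(1))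
  moreover have "(\<Sum>i<n. e i) / real n + (\<Sum>i<n. L (i mod P)) / real n = (\<Sum>i<n. s i) / real n" for n
    by (simp add: e_def sum_subtractf add_divide_distrib[symmetric])
  ultimately show ?thesis by (auto simp: convergent_def)
qed

section \<open>Roots of unity and the periodic part\<close>

definition unit_root :: "nat \<Rightarrow> complex" where
  "unit_root T = exp (2 * of_real pi * \<i> / of_nat T)"

lemma unit_root_power: "unit_root T ^ k = exp (2 * of_real pi * \<i> * of_nat k / of_nat T)"
  by (simp add: unit_root_def exp_of_nat_mult[symmetric] mult_ac)

lemma norm_unit_root: "norm (unit_root T) = 1"
  by (simp add: unit_root_def norm_exp_eq_Re)

lemma unit_root_power_eq_1_iff: "0 < T \<Longrightarrow> unit_root T ^ k = 1 \<longleftrightarrow> T dvd k"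
  unfolding unit_root_power by (rule complex_root_unity_eq_1) simp

lemma roots_of_unity_filter:
  assumes T: "0 < T"
  shows "(\<Sum>j<T. (unit_root T ^ k) ^ j) = (if T dvd k then of_nat T else 0)"
proof (cases "T dvd k")
  case False
  have "(unit_root T ^ k) ^ T = 1"
    using unit_root_power_eq_1_iff[OF T, of "k * T"] by (simp add: power_mult)
  then show ?thesis
    using False unit_root_power_eq_1_iff[OF T] by (simp add: sum_gp_strict)
next
  case True
  then have "unit_root T ^ k = 1" using unit_root_power_eq_1_iff[OF T] by simp
  then show ?thesis using True by simp
qed

lemma dvd_add_diff_iff_mod_eq:
  fixes m T r :: nat
  assumes "r < T"
  shows "T dvd m + (T - r) \<longleftrightarrow> m mod T = r"
proof -
  have "T dvd m + (T - r) \<longleftrightarrow> T dvd (m + T) - r"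
    using assms by (simp add: Nat.add_diff_assoc)
  also have "\<dots> \<longleftrightarrow> (m + T) mod T = r mod T"
    using assms by (intro mod_eq_dvd_iff_nat[symmetric]) simp
  finally show ?thesis using assms by simp
qed

definition dft_coeff :: "nat \<Rightarrow> (nat \<Rightarrow> real) \<Rightarrow> nat \<Rightarrow> complex" where
  "dft_coeff T h j = (\<Sum>r<T. of_real (h r) * (unit_root T ^ j) ^ (T - r)) / of_nat T"

lemma periodic_eq_dft:
  assumes T: "0 < T"
  shows "of_real (h (m mod T)) = (\<Sum>j<T. dft_coeff T h j * (unit_root T ^ j) ^ m)"
proof -
  have pw: "(unit_root T ^ j) ^ (T - r) * (unit_root T ^ j) ^ m = (unit_root T ^ (m + (T - r))) ^ j"
    for j r by (metis power_add power_mult mult.commute add.commute)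
  have "(\<Sum>j<T. dft_coeff T h j * (unit_root T ^ j) ^ m)
      = (\<Sum>j<T. \<Sum>r<T. of_real (h r) * (unit_root T ^ (m + (T - r))) ^ j) / of_nat T"
    unfolding dft_coeff_def sum_divide_distrib
    by (intro sum.cong refl) (simp add: sum_distrib_right mult.assoc pw)
  also have "\<dots> = (\<Sum>r<T. of_real (h r) * (\<Sum>j<T. (unit_root T ^ (m + (T - r))) ^ j)) / of_nat T"
    by (subst sum.swap) (simp add: sum_distrib_left)
  also have "\<dots> = (\<Sum>r<T. of_real (h r) * (if m mod T = r then of_nat T else 0)) / of_nat T"
  proof (intro arg_cong[where f="\<lambda>z. z / of_nat T"] sum.cong refl)
    fix r assume "r \<in> {..<T}"
    then show "of_real (h r) * (\<Sum>j<T. (unit_root T ^ (m + (T - r))) ^ j)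
        = of_real (h r) * (if m mod T = r then of_nat T else 0)"
      by (simp only: roots_of_unity_filter[OF T] dvd_add_diff_iff_mod_eq lessThan_iff)
  qed
  also have "\<dots> = of_real (h (m mod T))"
    using T by (simp add: if_distrib[of "\<lambda>z. _ * z"] cong: if_cong)
  finally show ?thesis ..
qed

context galton_watson
begin

lemma norm_funpow_pgf_le_1: "norm (z::complex) \<le> 1 \<Longrightarrow> norm ((pgf a ^^ n) z) \<le> 1"
  by (induction n) (simp_all add: norm_pgf_le_1 prob_seq_offspring)

lemma residue_convergent_funpow_pgf_root:
  fixes \<omega> :: complex
  assumes T: "0 < T" and \<omega>: "\<omega> ^ T = 1"
  shows "residue_convergent (\<lambda>n. (pgf a ^^ n) \<omega>)"
proof (cases "\<exists>N. norm ((pgf a ^^ N) \<omega>) < 1")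
  case True
  then obtain N where N: "norm ((pgf a ^^ N) \<omega>) < 1" by blast
  have "(\<lambda>n. (pgf a ^^ (n + N)) \<omega>) = (\<lambda>n. (pgf a ^^ n) ((pgf a ^^ N) \<omega>))"
    by (simp add: funpow_add)
  then have "convergent (\<lambda>n. (pgf a ^^ (n + N)) \<omega>)"
    using funpow_pgf_tendsto_disc[OF N] by (auto simp: convergent_def)
  then show ?thesis
    by (rule residue_convergent_shift[of "\<lambda>n. (pgf a ^^ n) \<omega>" N, OF convergent_imp_residue_convergent])
next
  case False
  have norm_\<omega>: "norm \<omega> = 1" using power_eq_1_iff[OF \<omega>] T by auto
  have "((pgf a ^^ n) \<omega>) ^ T = 1" for n
  proof (induction n)
    case (Suc n)
    have "\<not> norm ((pgf a ^^ Suc n) \<omega>) < 1"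
      using False by blast
    moreover have "norm ((pgf a ^^ Suc n) \<omega>) \<le> 1"
      using norm_funpow_pgf_le_1[of \<omega> "Suc n"] norm_\<omega> by (simp del: funpow.simps)
    ultimately have "norm ((pgf a ^^ Suc n) \<omega>) = 1" by linarith
    then show ?case using pgf_root_of_unity[OF T Suc] by simp
  qed (use \<omega> in simp)
  then have "range (\<lambda>n. (pgf a ^^ n) \<omega>) \<subseteq> {z. z ^ T = 1}" by blast
  moreover have "finite {z::complex. z ^ T = 1}"
    using T by (intro finite_roots_unity) simp
  ultimately have "finite (range (\<lambda>n. (pgf a ^^ n) \<omega>))"
    by (rule finite_subset)
  then have "\<not> inj (\<lambda>n. (pgf a ^^ n) \<omega>)"
    using finite_imageD infinite_UNIV_nat by blast
  then obtain i j where "i \<noteq> j" "(pgf a ^^ i) \<omega> = (pgf a ^^ j) \<omega>"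
    unfolding inj_def by blast
  then obtain i j where ij: "i < j" "(pgf a ^^ i) \<omega> = (pgf a ^^ j) \<omega>"
    by (metis nat_neq_iff)
  have "(pgf a ^^ (n + (j - i))) \<omega> = (pgf a ^^ n) \<omega>" if "i \<le> n" for n
    using that
  proof (induction n rule: dec_induct)
    case base
    then show ?case using ij by simp
  next
    case (step n)
    then show ?case by simp
  qed
  then show ?thesis
    using ij(1) by (intro residue_convergent_eventually_periodic[of "j - i" i]) auto
qed

lemma generation_periodic_mean_eq:
  assumes T: "0 < T"
  shows "(\<Sum>m. generation a n m * h (m mod T))
    = Re (\<Sum>j<T. dft_coeff T h j * (pgf a ^^ n) (unit_root T ^ j))"
proof -
  let ?q = "generation a n" and ?\<omega> = "\<lambda>j. unit_root T ^ j"
  have q: "prob_seq ?q" by (rule prob_seq_generation[OF prob_seq_offspring])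
  have norm_\<omega>: "norm (?\<omega> j ^ m) = 1" for j m
    by (simp add: norm_power norm_unit_root)
  have summable_\<omega>: "summable (\<lambda>m. ?q m *\<^sub>R ?\<omega> j ^ m)" for j
    using summable_norm_cancel[OF prob_seq_summable_norm_scaleR[OF q, of "\<lambda>m. ?\<omega> j ^ m" 1]] norm_\<omega>
    by simp
  have "\<bar>h (m mod T)\<bar> \<le> (\<Sum>r<T. \<bar>h r\<bar>)" for m
    using T by (intro member_le_sum) auto
  then have "summable (\<lambda>m. ?q m * h (m mod T))"
    by (rule prob_seq_summable_mult[OF q])
  then have "of_real (\<Sum>m. ?q m * h (m mod T)) = (\<Sum>m. of_real (?q m) * of_real (h (m mod T)) :: complex)"
    by (simp add: suminf_of_real)
  also have "\<dots> = (\<Sum>m. \<Sum>j<T. dft_coeff T h j * (?q m *\<^sub>R ?\<omega> j ^ m))"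
    using periodic_eq_dft[OF T, of h]
    by (simp add: sum_distrib_left scaleR_conv_of_real mult_ac power_mult[symmetric])
  also have "\<dots> = (\<Sum>j<T. \<Sum>m. dft_coeff T h j * (?q m *\<^sub>R ?\<omega> j ^ m))"
    by (intro suminf_sum summable_mult summable_\<omega>)
  also have "\<dots> = (\<Sum>j<T. dft_coeff T h j * (\<Sum>m. ?q m *\<^sub>R ?\<omega> j ^ m))"
    by (intro sum.cong refl suminf_mult summable_\<omega>)
  also have "\<dots> = (\<Sum>j<T. dft_coeff T h j * (pgf a ^^ n) (?\<omega> j))"
    using norm_\<omega>[of _ 1] by (simp add: funpow_pgf[OF prob_seq_offspring] pgf_def)
  finally show ?thesis by (metis Re_complex_of_real)
qed

lemma residue_convergent_generation_periodic:
  assumes T: "0 < T"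
  shows "residue_convergent (\<lambda>n. \<Sum>m. generation a n m * h (m mod T))"
proof -
  have "(unit_root T ^ j) ^ T = 1" for j
    using unit_root_power_eq_1_iff[OF T, of "j * T"] by (simp add: power_mult[symmetric] mult.commute)
  then have "residue_convergent (\<lambda>n. Re (\<Sum>j<T. dft_coeff T h j * (pgf a ^^ n) (unit_root T ^ j)))"
    by (intro residue_convergent_Re residue_convergent_sum residue_convergent_mult
        residue_convergent_const residue_convergent_funpow_pgf_root[OF T])
  then show ?thesis by (simp only: generation_periodic_mean_eq[OF T])
qed

lemma abs_generation_tail_le:
  assumes W: "\<And>m. \<bar>W m\<bar> \<le> C * \<gamma> ^ m" and \<gamma>: "0 < \<gamma>" "\<gamma> < 1"
  shows "\<bar>\<Sum>m. generation a n (Suc m) * W (Suc m)\<bar> \<le> C * ((pgf a ^^ n) \<gamma> - (pgf a ^^ n) 0)"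
proof -
  let ?q = "generation a n"
  have q: "prob_seq ?q" by (rule prob_seq_generation[OF prob_seq_offspring])
  have pgf_summable: "summable (\<lambda>m. ?q m * \<gamma> ^ m)"
    using \<gamma> by (intro prob_seq_summable_mult[of _ _ 1, OF q]) (simp add: power_le_one)
  have bound: "\<bar>?q (Suc m) * W (Suc m)\<bar> \<le> C * (?q (Suc m) * \<gamma> ^ Suc m)" for m
    using mult_left_mono[OF W[of "Suc m"] prob_seq_nonneg[OF q, of "Suc m"]] prob_seq_nonneg[OF q, of "Suc m"]
    by (simp add: abs_mult mult_ac)
  have summ: "summable (\<lambda>m. C * (?q (Suc m) * \<gamma> ^ Suc m))"
    using summable_ignore_initial_segment[OF pgf_summable, of 1] by (simp add: summable_mult)
  have abs_summ: "summable (\<lambda>m. \<bar>?q (Suc m) * W (Suc m)\<bar>)"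
    by (rule summable_comparison_test[OF _ summ]) (use bound in auto)
  then have "\<bar>\<Sum>m. ?q (Suc m) * W (Suc m)\<bar> \<le> (\<Sum>m. \<bar>?q (Suc m) * W (Suc m)\<bar>)"
    by (rule summable_rabs)
  also have "\<dots> \<le> (\<Sum>m. C * (?q (Suc m) * \<gamma> ^ Suc m))"
    by (rule suminf_le[OF bound abs_summ summ])
  also have "\<dots> = C * (pgf ?q \<gamma> - ?q 0)"
    using suminf_mult[OF summable_ignore_initial_segment[OF pgf_summable, of 1], of C]
      suminf_split_head[OF pgf_summable] by (simp add: pgf_def)
  also have "\<dots> = C * ((pgf a ^^ n) \<gamma> - (pgf a ^^ n) 0)"
    using \<gamma> by (simp add: generation_zero funpow_pgf prob_seq_offspring)
  finally show ?thesis .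
qed

lemma generation_mean_tendsto:
  assumes W: "\<And>m. \<bar>W m\<bar> \<le> C * \<gamma> ^ m" and \<gamma>: "0 < \<gamma>" "\<gamma> < 1"
  shows "(\<lambda>n. \<Sum>m. generation a n m * W m) \<longlonglongrightarrow> extinction_prob * W 0"
proof -
  have C: "0 \<le> C" using W[of 0] by simp
  have W_le: "\<bar>W m\<bar> \<le> C" for m
    using W[of m] mult_left_le[OF power_le_one[of \<gamma> m] C] \<gamma> by simp
  have head: "(\<Sum>m. generation a n m * W m)
      = generation a n 0 * W 0 + (\<Sum>m. generation a n (Suc m) * W (Suc m))" for n
    using suminf_split_head[OF prob_seq_summable_mult[of "generation a n" W C,
          OF prob_seq_generation[OF prob_seq_offspring] W_le]]
    by simp
  have "(\<lambda>n. C * ((pgf a ^^ n) \<gamma> - (pgf a ^^ n) 0)) \<longlonglongrightarrow> C * (extinction_prob - extinction_prob)"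
    using \<gamma> by (intro tendsto_mult tendsto_const tendsto_diff funpow_pgf_tendsto extinction_prob_tendsto) auto
  then have "(\<lambda>n. \<Sum>m. generation a n (Suc m) * W (Suc m)) \<longlonglongrightarrow> 0"
    by (intro Lim_null_comparison[OF always_eventually[OF allI[OF abs_generation_tail_le[OF W \<gamma>,
          unfolded real_norm_def[symmetric]]]]]) simp
  moreover have "(\<lambda>n. generation a n 0 * W 0) \<longlonglongrightarrow> extinction_prob * W 0"
    by (simp add: generation_zero extinction_prob_tendsto tendsto_mult_right)
  ultimately have "(\<lambda>n. generation a n 0 * W 0 + (\<Sum>m. generation a n (Suc m) * W (Suc m)))
      \<longlonglongrightarrow> extinction_prob * W 0 + 0"
    by (intro tendsto_add)
  then show ?thesis by (simp only: head add_0_right)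
qed

end

context finite_group
begin

lemma residue_convergent_iterates:
  assumes x: "x \<in> gsimplex G" and a: "galton_watson a"
  shows "residue_convergent (\<lambda>n. (pmap G a ^^ n) x g)"
proof -
  interpret galton_watson a by (rule a)
  obtain T L C \<gamma> where T: "0 < T" and \<gamma>: "0 < \<gamma>" "\<gamma> < 1"
    and close: "\<And>m g. \<bar>gpow G x m g - L (m mod T) g\<bar> \<le> C * \<gamma> ^ m"
    by (rule gpow_asymptotically_periodic[OF x]) (rule that)
  define W where "W m = gpow G x m g - L (m mod T) g" for m
  have W: "\<bar>W m\<bar> \<le> C * \<gamma> ^ m" for m
    using close by (simp add: W_def)
  have C: "0 \<le> C" using W[of 0] by simp
  have W_le: "\<bar>W m\<bar> \<le> C" for m
    using W[of m] mult_left_le[OF power_le_one[of \<gamma> m] C] \<gamma> by simp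
  have L_le: "\<bar>L (m mod T) g\<bar> \<le> (\<Sum>r<T. \<bar>L r g\<bar>)" for m
    using T by (intro member_le_sum) auto
  have eq: "(pmap G a ^^ n) x g = (\<Sum>m. generation a n m * L (m mod T) g) + (\<Sum>m. generation a n m * W m)"
    for n
  proof -
    have q: "prob_seq (generation a n)" by (rule prob_seq_generation[OF prob_seq_offspring])
    have "(pmap G a ^^ n) x g = (\<Sum>m. generation a n m * gpow G x m g)"
      by (simp add: funpow_pmap[OF x prob_seq_offspring] pmap_def)
    also have "\<dots> = (\<Sum>m. generation a n m * L (m mod T) g + generation a n m * W m)"
      by (simp add: W_def algebra_simps)
    also have "\<dots> = (\<Sum>m. generation a n m * L (m mod T) g) + (\<Sum>m. generation a n m * W m)"
      by (rule suminf_add[OF prob_seq_summable_mult[OF q L_le] prob_seq_summable_mult[OF q W_le], symmetric])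
    finally show ?thesis .
  qed
  have "residue_convergent (\<lambda>n. \<Sum>m. generation a n m * L (m mod T) g)"
    by (rule residue_convergent_generation_periodic[OF T])
  moreover have "residue_convergent (\<lambda>n. \<Sum>m. generation a n m * W m)"
    using generation_mean_tendsto[OF W \<gamma>] by (intro convergent_imp_residue_convergent) (auto simp: convergent_def)
  ultimately show ?thesis
    unfolding eq by (rule residue_convergent_add)
qed

end

lemma tendsto_fun_componentwise:
  fixes f :: "nat \<Rightarrow> 'a \<Rightarrow> real"
  assumes "\<And>g. (\<lambda>n. f n g) \<longlonglongrightarrow> l g"
  shows "f \<longlonglongrightarrow> l"
proof -
  have "limitin (product_topology (\<lambda>i. euclidean) UNIV) f l sequentially"
    using assms by (simp add: limitin_componentwise)
  then show ?thesis by (simp add: euclidean_product_topology)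
qed

theorem theorem5:
  fixes G :: "('a, 'b) monoid_scheme" and a :: "nat \<Rightarrow> real" and x :: "'a \<Rightarrow> real"
  assumes "group G" and "finite (carrier G)"
    and "\<And>k. 0 \<le> a k \<and> a k < 1"
    and "a sums 1"
    and "x \<in> gsimplex G"
  shows "\<exists>L. (\<lambda>n. (\<lambda>g. (1 / real n) * (\<Sum>i=1..n. ((pmap G a) ^^ i) x g))) \<longlonglongrightarrow> L"
proof -
  interpret finite_group G
    using assms(1,2) by (simp add: finite_group_def finite_group_axioms_def)
  have "galton_watson a"
    using assms(3,4) by (simp add: galton_watson_def prob_seq_def)
  then have "residue_convergent (\<lambda>i. (pmap G a ^^ Suc i) x g)" for g
    by (rule residue_convergent_Suc[OF residue_convergent_iterates[OF assms(5)]])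
  then have "convergent (\<lambda>n. (1 / real n) * (\<Sum>i=1..n. (pmap G a ^^ i) x g))" for g
    using residue_convergent_cesaro by (simp add: sum.atLeast1_atMost_eq)
  then have "\<forall>g. \<exists>l. (\<lambda>n. (1 / real n) * (\<Sum>i=1..n. (pmap G a ^^ i) x g)) \<longlonglongrightarrow> l"
    by (simp add: convergent_def)
  then obtain L where "\<And>g. (\<lambda>n. (1 / real n) * (\<Sum>i=1..n. (pmap G a ^^ i) x g)) \<longlonglongrightarrow> L g"
    by metis
  then show ?thesis
    by (intro exI tendsto_fun_componentwise)
qed

end
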